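(* Let $p$ be a prime, $n\ge 1$, and let $a_1,\ldots,a_n\in\mathbb{Q}_p$ be not all zero. Define $$m=\max\{l\in\{1,\ldots,n\} : |l a_l|\ge |j a_j| \text{ for all } j\in\{1,\ldots,n\},\ j\neq l\}.$$ Then $$\left|\int_{|x|\le 1}\chi(a_1x+a_2x^2+\dots+a_nx^n)\,dx\right|\le \frac{p^{m}}{|m a_m|^{1/m}}.$$
   Context: $|\cdot|$ denotes the $p$-adic absolute value on $\mathbb{Q}_p$ (so $|p^k u/v|=p^{-k}$ for integers $u,v$ prime to $p$, and for a positive integer $j$, $|j|$ is its $p$-adic absolute value, not its real absolute value). Every nonzero $x\in\mathbb{Q}_p$ has a unique standard expansion $x=\sum_{j=k}^\infty x_jp^j$ with $x_j\in\{0,\ldots,p-1\}$, $x_k\neq 0$, $|x|=p^{-k}$. The additive character $\chi:\mathbb{Q}_p\to\mathbb{C}$ is $\chi(x)=\exp\!\big(2\pi i\sum_{j=k}^{-1}x_jp^j\big)$ if $|x|>1$ and $\chi(x)=1$ if $|x|\le 1$. $dx$ is the Haar measure on $\mathbb{Q}_p$ normalized so that each ball $\{x:|x-x_0|\le p^r\}$ has measure $p^r$; integrals over $|x|\le 1$ are over $\{x\in\mathbb{Q}_p:|x|\le 1\}$. *)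

theory Defs
  imports "HOL-Analysis.Analysis" "HOL-Computational_Algebra.Primes"
begin

text \<open>p-adic numbers represented by their standard digit expansions
  x = sum_j x_j p^j, stored as a digit function int => nat.\<close>

type_synonym padic = "int \<Rightarrow> nat"

definition Qp :: "nat \<Rightarrow> padic set" where
  "Qp p = {d. (\<forall>j. d j < p) \<and> (\<exists>k. \<forall>j<k. d j = 0)}"

definition pabs :: "nat \<Rightarrow> padic \<Rightarrow> real" where
  "pabs p d = (if d = (\<lambda>_. 0) then 0
               else real p powi (- (LEAST j. d j \<noteq> 0)))"

definition ptrunc :: "nat \<Rightarrow> int \<Rightarrow> padic \<Rightarrow> real" where
  "ptrunc p N d = (\<Sum>j\<in>{j. j < N \<and> d j \<noteq> 0}. real (d j) * real p powi j)"

text \<open>The j-th p-adic digit of a number in Z[1/p] (given as a real).\<close>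
definition pdigit :: "nat \<Rightarrow> int \<Rightarrow> real \<Rightarrow> nat" where
  "pdigit p j q = nat (\<lfloor>q / real p powi j\<rfloor> mod int p)"

definition padd :: "nat \<Rightarrow> padic \<Rightarrow> padic \<Rightarrow> padic" where
  "padd p x y = (\<lambda>j. THE c. \<forall>\<^sub>F M in sequentially.
      pdigit p j (ptrunc p (int M) x + ptrunc p (int M) y) = c)"

definition pmul :: "nat \<Rightarrow> padic \<Rightarrow> padic \<Rightarrow> padic" where
  "pmul p x y = (\<lambda>j. THE c. \<forall>\<^sub>F M in sequentially.
      pdigit p j (ptrunc p (int M) x * ptrunc p (int M) y) = c)"

definition pof_nat :: "nat \<Rightarrow> nat \<Rightarrow> padic" where
  "pof_nat p r = (\<lambda>j. if j < 0 then 0 else (r div p ^ nat j) mod p)"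

fun ppow :: "nat \<Rightarrow> padic \<Rightarrow> nat \<Rightarrow> padic" where
  "ppow p x 0 = pof_nat p 1"
| "ppow p x (Suc k) = pmul p (ppow p x k) x"

fun peval :: "nat \<Rightarrow> (nat \<Rightarrow> padic) \<Rightarrow> nat \<Rightarrow> padic \<Rightarrow> padic" where
  "peval p a 0 x = (\<lambda>_. 0)"
| "peval p a (Suc k) x = padd p (peval p a k x) (pmul p (a (Suc k)) (ppow p x (Suc k)))"

definition pchi :: "nat \<Rightarrow> padic \<Rightarrow> complex" where
  "pchi p d = cis (2 * pi * (\<Sum>j\<in>{j. j < 0 \<and> d j \<noteq> 0}. real (d j) * real p powi j))"

text \<open>Haar integral over Z_p = {|x| <= 1} (of a continuous function), as the limit
  of Riemann sums over the balls r + p^N Z_p, r = 0..p^N-1, each of measure p^(-N).\<close>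
definition pint :: "nat \<Rightarrow> (padic \<Rightarrow> complex) \<Rightarrow> complex" where
  "pint p g = lim (\<lambda>N. (\<Sum>r<p ^ N. g (pof_nat p r)) / of_nat (p ^ N))"

end

theory Submission
  imports Defs
begin

(*
  Only the fractional parts of the coefficients matter. If all a_j lie in p^-k Z_p, put
  A_j = p^k {a_j}; then chi(f(x)) = e(A(x) / p^k), and the integral is p^-k S_k(A) for the
  complete exponential sum S_k(A) = sum_{x mod p^k} e(A(x) / p^k). If |m a_m| = p^K, then
  t = k - K is the least valuation of the j A_j and m the largest index attaining it, so
  the claim is |S_k(A)| <= p^k p^(m - (k - t)/m).

  Writing x = y + p u gives
  S_(k+1)(A) = sum_(y mod p) e(A(y) / p^(k+1)) S_k(B_y) with B_y(u) = (A(y + p u) - A(y)) / p.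
  If A'(y) is not divisible by p^(t+1), the linear term of B_y dominates and its sum vanishes
  (a complete sum of a nontrivial character). Otherwise let d <= m - 1 be the first order at
  which the Taylor coefficients of A' at y are not divisible by p^(t+1); then B_y has dominant
  index at most d + 1 and valuation at most t + d, and the induction hypothesis applies. By a
  Hensel argument at most one residue reaches the maximal order m - 1.

  On the p-adic side, digitwise sums and products are limits of sums and products of
  truncations, which identifies chi(f(r)) for natural r and makes the Riemann sums defining
  the integral eventually constant.
*)

section \<open>Complete exponential sums modulo prime powers\<close>

definition ipoly :: "(nat \<Rightarrow> int) \<Rightarrow> nat \<Rightarrow> int \<Rightarrow> int" where
  "ipoly c n x = (\<Sum>j\<le>n. c j * x ^ j)"

definition taylor_coeff :: "(nat \<Rightarrow> int) \<Rightarrow> nat \<Rightarrow> int \<Rightarrow> nat \<Rightarrow> int" where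
  "taylor_coeff c n y i = (\<Sum>j\<in>{i..n}. c j * int (j choose i) * y ^ (j - i))"

lemma ipoly_taylor: "ipoly c n (y + u) = (\<Sum>i\<le>n. taylor_coeff c n y i * u ^ i)"
proof -
  let ?g = "\<lambda>j i. c j * int (j choose i) * y ^ (j - i) * u ^ i"
  have "ipoly c n (y + u) = (\<Sum>j\<le>n. \<Sum>i\<le>j. ?g j i)"
    unfolding ipoly_def
    by (rule sum.cong[OF refl]) (simp add: binomial_ring[of u y] sum_distrib_left mult_ac add.commute)
  also have "\<dots> = (\<Sum>j\<le>n. \<Sum>i | i \<le> n \<and> i \<le> j. ?g j i)"
    by (intro sum.cong refl) auto
  also have "\<dots> = (\<Sum>i\<le>n. \<Sum>j | j \<le> n \<and> i \<le> j. ?g j i)"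
    using sum.swap_restrict[of "{..n}" "{..n}" ?g "\<lambda>j i. i \<le> j"] by simp
  also have "\<dots> = (\<Sum>i\<le>n. \<Sum>j\<in>{i..n}. ?g j i)"
    by (intro sum.cong refl) auto
  finally show ?thesis unfolding taylor_coeff_def by (simp add: sum_distrib_right)
qed

lemma taylor_coeff_0: "taylor_coeff c n y 0 = ipoly c n y"
  unfolding taylor_coeff_def ipoly_def by (simp add: atLeast0AtMost)

lemma ipoly_add_mult:
  "ipoly c n (y + z * u) = ipoly c n y + z * (\<Sum>i<n. taylor_coeff c n y (Suc i) * z ^ i * u ^ Suc i)"
proof -
  have "ipoly c n (y + z * u) = (\<Sum>i\<le>n. taylor_coeff c n y i * (z * u) ^ i)"
    by (rule ipoly_taylor)
  also have "\<dots> = taylor_coeff c n y 0 + (\<Sum>i<n. taylor_coeff c n y (Suc i) * (z * u) ^ Suc i)"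
    by (subst sum.atMost_shift) simp
  finally show ?thesis
    by (simp add: taylor_coeff_0 sum_distrib_left power_mult_distrib mult_ac)
qed

definition shifted_coeffs :: "nat \<Rightarrow> (nat \<Rightarrow> int) \<Rightarrow> nat \<Rightarrow> int \<Rightarrow> nat \<Rightarrow> int" where
  "shifted_coeffs p c n y i = (if i = 0 then 0 else int p ^ (i - 1) * taylor_coeff c n y i)"

lemma ipoly_shift:
  "ipoly c n (y + int p * u) = ipoly c n y + int p * ipoly (shifted_coeffs p c n y) n u"
proof -
  have "ipoly (shifted_coeffs p c n y) n u
      = (\<Sum>i<n. taylor_coeff c n y (Suc i) * int p ^ i * u ^ Suc i)"
    unfolding ipoly_def by (subst sum.atMost_shift) (simp add: shifted_coeffs_def mult_ac)
  then show ?thesis by (simp add: ipoly_add_mult)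
qed

definition add_char :: "nat \<Rightarrow> nat \<Rightarrow> int \<Rightarrow> complex" where
  "add_char p k z = cis (2 * pi * real_of_int z / real p ^ k)"

lemma add_char_add: "add_char p k (a + b) = add_char p k a * add_char p k b"
  unfolding add_char_def by (simp add: cis_mult add_divide_distrib distrib_left)

lemma add_char_multiple: "p > 0 \<Longrightarrow> add_char p k (int p ^ k * w) = 1"
proof -
  assume "p > 0"
  then have "2 * pi * real_of_int (int p ^ k * w) / real p ^ k = 2 * pi * real_of_int w"
    by (simp add: field_simps)
  then show ?thesis unfolding add_char_def by simp
qed

lemma add_char_Suc_mult: "p > 0 \<Longrightarrow> add_char p (Suc k) (int p * z) = add_char p k z"
  unfolding add_char_def by (simp add: field_simps)

lemma norm_add_char [simp]: "norm (add_char p k z) = 1"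
  unfolding add_char_def by simp

lemma add_char_ipoly_periodic:
  "p > 0 \<Longrightarrow> add_char p k (ipoly c n (x + int p ^ k)) = add_char p k (ipoly c n x)"
  using ipoly_add_mult[of c n x "int p ^ k" 1] by (simp add: add_char_add add_char_multiple)

definition exp_sum :: "nat \<Rightarrow> nat \<Rightarrow> (nat \<Rightarrow> int) \<Rightarrow> nat \<Rightarrow> complex" where
  "exp_sum p k c n = (\<Sum>x<p ^ k. add_char p k (ipoly c n (int x)))"

lemma norm_exp_sum_le_card: "norm (exp_sum p k c n) \<le> real p ^ k"
proof -
  have "norm (exp_sum p k c n) \<le> (\<Sum>x<p ^ k. norm (add_char p k (ipoly c n (int x))))"
    unfolding exp_sum_def by (rule norm_sum)
  then show ?thesis by simp
qed

lemma sum_lessThan_mult_residues: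
  fixes f :: "nat \<Rightarrow> 'a::comm_monoid_add"
  assumes "p > 0"
  shows "(\<Sum>x<p * q. f x) = (\<Sum>y<p. \<Sum>u<q. f (y + p * u))"
proof -
  have bound: "y + p * u < p * q" if "y < p" "u < q" for y u
  proof -
    have "y + p * u < p * Suc u" using that by simp
    also have "\<dots> \<le> p * q" using that by (intro mult_le_mono2) simp
    finally show ?thesis .
  qed
  have "(\<Sum>y<p. \<Sum>u<q. f (y + p * u)) = (\<Sum>z\<in>{..<p} \<times> {..<q}. f (fst z + p * snd z))"
    by (simp add: sum.cartesian_product split_def)
  also have "\<dots> = (\<Sum>x<p * q. f x)"
    by (rule sum.reindex_bij_witness[where i="\<lambda>x. (x mod p, x div p)" and j="\<lambda>z. fst z + p * snd z"])
       (use assms bound in \<open>auto simp: less_mult_imp_div_less mult.commute\<close>)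
  finally show ?thesis by simp
qed

lemma exp_sum_Suc:
  assumes "p > 0"
  shows "exp_sum p (Suc k) c n =
    (\<Sum>y<p. add_char p (Suc k) (ipoly c n (int y)) * exp_sum p k (shifted_coeffs p c n (int y)) n)"
  unfolding exp_sum_def sum_distrib_left
  by (simp add: sum_lessThan_mult_residues[OF assms] ipoly_shift add_char_add add_char_Suc_mult assms)

definition deriv_taylor_coeff :: "(nat \<Rightarrow> int) \<Rightarrow> nat \<Rightarrow> int \<Rightarrow> nat \<Rightarrow> int" where
  "deriv_taylor_coeff c n y i =
     (\<Sum>j\<in>{Suc i..n}. (int j * c j) * int ((j - 1) choose i) * y ^ (j - Suc i))"

lemma Suc_mult_taylor_coeff: "int (Suc i) * taylor_coeff c n y (Suc i) = deriv_taylor_coeff c n y i"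
  unfolding taylor_coeff_def deriv_taylor_coeff_def sum_distrib_left
proof (intro sum.cong refl)
  fix j assume "j \<in> {Suc i..n}"
  then obtain j0 where j0: "j = Suc j0" by (cases j) auto
  have "int (Suc i) * int (Suc j0 choose Suc i) = int (Suc j0) * int (j0 choose i)"
    using Suc_times_binomial_eq[of j0 i] by (metis mult.commute of_nat_mult)
  then show "int (Suc i) * (c j * int (j choose Suc i) * y ^ (j - Suc i)) =
      int j * c j * int ((j - 1) choose i) * y ^ (j - Suc i)"
    using j0 by (simp add: mult_ac)
qed

lemma deriv_taylor_coeff_taylor:
  assumes "n \<ge> 1"
  shows "deriv_taylor_coeff c n z 0 = (\<Sum>i\<le>n - 1. deriv_taylor_coeff c n y i * (z - y) ^ i)"
proof -
  define c' where "c' j = int (Suc j) * c (Suc j)" for j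
  obtain n0 where n: "n = Suc n0" using assms by (cases n) auto
  have eq: "deriv_taylor_coeff c n x i = taylor_coeff c' (n - 1) x i" for x i
    unfolding deriv_taylor_coeff_def taylor_coeff_def c'_def n
    by (subst sum.shift_bounds_cl_Suc_ivl) simp
  show ?thesis
    unfolding eq taylor_coeff_0 using ipoly_taylor[of c' "n - 1" y "z - y"] by simp
qed

lemma index_mult_shifted_coeffs:
  "i \<ge> 1 \<Longrightarrow> int i * shifted_coeffs p c n y i = int p ^ (i - 1) * deriv_taylor_coeff c n y (i - 1)"
  using Suc_mult_taylor_coeff[of "i - 1" c n y] by (simp add: shifted_coeffs_def mult_ac)

text \<open>\<open>t\<close> is the least valuation of the \<open>j c\<^sub>j\<close> and \<open>m\<close> the largest index attaining it,
  as in the theorem.\<close>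

definition dominant_index :: "nat \<Rightarrow> (nat \<Rightarrow> int) \<Rightarrow> nat \<Rightarrow> nat \<Rightarrow> nat \<Rightarrow> bool" where
  "dominant_index p c n m t \<longleftrightarrow> 1 \<le> m \<and> m \<le> n \<and> (\<forall>j\<in>{1..n}. int p ^ t dvd int j * c j)
     \<and> \<not> int p ^ (t + 1) dvd int m * c m \<and> (\<forall>j\<in>{m<..n}. int p ^ (t + 1) dvd int j * c j)"

lemma dominant_index_dvd_deriv_taylor:
  "dominant_index p c n m t \<Longrightarrow> int p ^ t dvd deriv_taylor_coeff c n y i"
  unfolding dominant_index_def deriv_taylor_coeff_def by (intro dvd_sum) (auto intro!: dvd_mult2)

lemma dominant_index_dvd_deriv_taylor_ge:
  "dominant_index p c n m t \<Longrightarrow> i \<ge> m \<Longrightarrow> int p ^ (t + 1) dvd deriv_taylor_coeff c n y i"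
  unfolding dominant_index_def deriv_taylor_coeff_def by (intro dvd_sum) (auto intro!: dvd_mult2)

lemma dominant_index_not_dvd_deriv_taylor:
  assumes H: "dominant_index p c n m t"
  shows "\<not> int p ^ (t + 1) dvd deriv_taylor_coeff c n y (m - 1)"
proof
  assume dvd: "int p ^ (t + 1) dvd deriv_taylor_coeff c n y (m - 1)"
  have m: "1 \<le> m" "m \<le> n" using H unfolding dominant_index_def by auto
  let ?rest = "\<Sum>j\<in>{m<..n}. (int j * c j) * int ((j - 1) choose (m - 1)) * y ^ (j - m)"
  have "{Suc (m - 1)..n} = insert m {m<..n}" using m by auto
  then have "deriv_taylor_coeff c n y (m - 1) = int m * c m + ?rest"
    unfolding deriv_taylor_coeff_def using m by simp
  moreover have "int p ^ (t + 1) dvd ?rest"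
    using H unfolding dominant_index_def by (intro dvd_sum) (auto intro!: dvd_mult2)
  ultimately have "int p ^ (t + 1) dvd int m * c m" using dvd by (simp add: dvd_add_left_iff)
  then show False using H unfolding dominant_index_def by auto
qed

lemma dominant_index_shifted_coeffs:
  assumes H: "dominant_index p c n m t" and y: "\<not> int p ^ (t + 1) dvd deriv_taylor_coeff c n y 0"
  shows "dominant_index p (shifted_coeffs p c n y) n 1 t"
  unfolding dominant_index_def
proof (intro conjI ballI)
  show "1 \<le> (1::nat)" "1 \<le> n" using H unfolding dominant_index_def by auto
  show "\<not> int p ^ (t + 1) dvd int 1 * shifted_coeffs p c n y 1"
    using y index_mult_shifted_coeffs[of 1 p c n y] by simp
next
  fix j assume "j \<in> {1..n}"
  then show "int p ^ t dvd int j * shifted_coeffs p c n y j"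
    by (simp add: index_mult_shifted_coeffs dominant_index_dvd_deriv_taylor[OF H])
next
  fix j assume j: "j \<in> {1<..n}"
  obtain h where "deriv_taylor_coeff c n y (j - 1) = int p ^ t * h"
    using dominant_index_dvd_deriv_taylor[OF H] by blast
  moreover obtain e where "j - 1 = Suc e" using j by (cases "j - 1") auto
  ultimately show "int p ^ (t + 1) dvd int j * shifted_coeffs p c n y j"
    using j by (simp add: index_mult_shifted_coeffs mult_ac)
qed

lemma prime_power_dvd_pow_pred_mult:
  fixes p :: nat and X :: int
  assumes p: "prime p" and "i > 0" and "int p ^ a dvd int i * X"
  shows "int p ^ a dvd int p ^ (i - 1) * X"
  using assms(2,3)
proof (induction i arbitrary: a rule: less_induct)
  case (less i)
  show ?case
  proof (cases "p dvd i")
    case False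
    then have "coprime (int p ^ a) (int i)"
      using p by (simp add: prime_imp_coprime coprime_power_left_iff)
    then have "int p ^ a dvd X" using less.prems(2) coprime_dvd_mult_right_iff by blast
    then show ?thesis by simp
  next
    case True
    then obtain i' where i': "i = p * i'" by blast
    have "i' > 0" "i' < i" using i' less.prems(1) prime_gt_1_nat[OF p] by auto
    show ?thesis
    proof (cases a)
      case 0 then show ?thesis by simp
    next
      case (Suc b)
      have "int p * int p ^ b dvd int p * (int i' * X)"
        using less.prems(2) Suc i' by (simp add: mult_ac)
      then have "int p ^ b dvd int i' * X" using prime_gt_0_nat[OF p] by simp
      from less.IH[OF \<open>i' < i\<close> \<open>i' > 0\<close> this]
      have "int p ^ a dvd int p ^ i' * X"
        using Suc \<open>i' > 0\<close> by (cases i') (auto simp: mult_ac)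
      moreover have "int p ^ i' dvd int p ^ (i - 1)"
        using \<open>i' < i\<close> by (simp add: le_imp_power_dvd)
      ultimately show ?thesis by (meson dvd_trans mult_dvd_mono dvd_refl)
    qed
  qed
qed

lemma sum_add_char_linear_eq_0:
  assumes p: "prime p" and b: "\<not> int p dvd b"
  shows "(\<Sum>u<p ^ Suc t. add_char p (Suc t) (int p ^ t * b * int u)) = 0"
proof -
  have p0: "p > 0" using p prime_gt_0_nat by blast
  define z where "z = cis (2 * pi * real_of_int b / real p)"
  have pow: "add_char p (Suc t) (int p ^ t * b * int u) = z ^ u" for u
  proof -
    have "2 * pi * real_of_int (int p ^ t * b * int u) / real p ^ Suc t
        = real u * (2 * pi * real_of_int b / real p)"
      using p0 by (simp add: field_simps)
    then show ?thesis unfolding add_char_def z_def Complex.DeMoivre by (rule arg_cong[where f=cis])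
  qed
  have "z \<noteq> 1"
  proof
    assume "z = 1"
    then have "cos (2 * pi * real_of_int b / real p) = 1" unfolding z_def
      by (metis cis.sel(1) one_complex.sel(1))
    then obtain n :: int where "2 * pi * real_of_int b / real p = real_of_int n * 2 * pi"
      using cos_one_2pi_int by blast
    then have "real_of_int b = real_of_int n * real p" using p0 by (simp add: field_simps)
    then have "b = n * int p" by (metis of_int_eq_iff of_int_mult of_int_of_nat_eq)
    then show False using b by simp
  qed
  moreover have "z ^ (p ^ Suc t) = 1"
  proof -
    have "z ^ (p ^ Suc t) = cis (2 * pi * real_of_int (b * int p ^ t))"
      unfolding z_def Complex.DeMoivre using p0 by (simp add: field_simps)
    then show ?thesis by (simp add: cis_multiple_2pi)
  qed
  ultimately show ?thesis unfolding pow by (simp add: sum_gp_strict)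
qed

lemma exp_sum_shifted_coeffs_eq_0:
  assumes p: "prime p" and H: "dominant_index p c n 1 t"
  shows "exp_sum p (Suc t) (shifted_coeffs p c n y) n = 0"
proof -
  let ?B = "shifted_coeffs p c n y"
  have p0: "p > 0" using p prime_gt_0_nat by blast
  have n1: "n \<ge> 1" using H unfolding dominant_index_def by auto
  obtain b where b: "deriv_taylor_coeff c n y 0 = int p ^ t * b"
    using dominant_index_dvd_deriv_taylor[OF H] by blast
  have "\<not> int p dvd b"
  proof
    assume "int p dvd b"
    then have "int p ^ (t + 1) dvd deriv_taylor_coeff c n y 0" using b by (simp add: mult_dvd_mono)
    then show False using dominant_index_not_dvd_deriv_taylor[OF H] by simp
  qed
  have high: "int p ^ Suc t dvd ?B i * x ^ i" if "i \<in> {2..n}" for i x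
  proof -
    have "i - 1 \<ge> 1" "Suc (i - 1) = i" using that by auto
    then have "int p ^ (t + 1) dvd int i * taylor_coeff c n y i"
      using dominant_index_dvd_deriv_taylor_ge[OF H, of "i - 1" y]
        Suc_mult_taylor_coeff[of "i - 1" c n y] by simp
    then show ?thesis
      using prime_power_dvd_pow_pred_mult[OF p, of i "t + 1"] that
      by (simp add: shifted_coeffs_def dvd_mult2)
  qed
  have "add_char p (Suc t) (ipoly ?B n (int u)) = add_char p (Suc t) (int p ^ t * b * int u)" for u
  proof -
    have "{..n} = insert 0 (insert 1 {2..n})" using n1 by auto
    moreover have "?B 1 = int p ^ t * b"
      using index_mult_shifted_coeffs[of 1 p c n y] b by simp
    ultimately have "ipoly ?B n (int u) = int p ^ t * b * int u + (\<Sum>i\<in>{2..n}. ?B i * int u ^ i)"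
      unfolding ipoly_def by (simp add: shifted_coeffs_def)
    moreover obtain w where "(\<Sum>i\<in>{2..n}. ?B i * int u ^ i) = int p ^ Suc t * w"
      using high by (meson dvd_sum dvdE)
    ultimately show ?thesis using add_char_multiple[OF p0, of "Suc t" w] by (simp add: add_char_add)
  qed
  then show ?thesis
    unfolding exp_sum_def using sum_add_char_linear_eq_0[OF p \<open>\<not> int p dvd b\<close>] by simp
qed

lemma exp_sum_eq_0_dominant_index_1:
  assumes p: "prime p" and H: "dominant_index p c n 1 t" and k: "k \<ge> t + 2"
  shows "exp_sum p k c n = 0"
proof -
  have p0: "p > 0" using p prime_gt_0_nat by blast
  obtain d where d: "k = Suc (Suc t + d)" using le_Suc_ex[OF k] by auto
  have "exp_sum p (Suc (Suc t + d)) c n = 0" if "dominant_index p c n 1 t" for c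
    using that
  proof (induction d arbitrary: c)
    case 0
    then show ?case by (subst exp_sum_Suc[OF p0]) (simp add: exp_sum_shifted_coeffs_eq_0[OF p])
  next
    case (Suc d)
    have "dominant_index p (shifted_coeffs p c n y) n 1 t" for y
      using dominant_index_not_dvd_deriv_taylor[OF Suc.prems, of y]
      by (intro dominant_index_shifted_coeffs[OF Suc.prems]) simp
    then show ?case using Suc.IH by (subst exp_sum_Suc[OF p0]) simp
  qed
  then show ?thesis using H d by blast
qed

lemma exp_sum_shifted_coeffs_eq_0_noncritical:
  assumes "prime p" and "dominant_index p c n m t"
    and "\<not> int p ^ (t + 1) dvd deriv_taylor_coeff c n y 0" and "k \<ge> t + 2"
  shows "exp_sum p k (shifted_coeffs p c n y) n = 0"
  using assms by (intro exp_sum_eq_0_dominant_index_1 dominant_index_shifted_coeffs)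

lemma dominant_index_critical_order:
  assumes H: "dominant_index p c n m t"
  obtains d where "d \<le> m - 1" and "\<not> int p ^ (t + 1) dvd deriv_taylor_coeff c n y d"
    and "\<forall>i<d. int p ^ (t + 1) dvd deriv_taylor_coeff c n y i"
proof -
  let ?P = "\<lambda>i. \<not> int p ^ (t + 1) dvd deriv_taylor_coeff c n y i"
  have "(LEAST i. ?P i) \<le> m - 1" by (rule Least_le) (rule dominant_index_not_dvd_deriv_taylor[OF H])
  moreover have "?P (LEAST i. ?P i)" by (rule LeastI) (rule dominant_index_not_dvd_deriv_taylor[OF H])
  moreover have "\<forall>i<(LEAST i. ?P i). \<not> ?P i" using not_less_Least by blast
  ultimately show thesis using that by blast
qed

text \<open>Hensel-type uniqueness: expanding the derivative around \<open>y\<^sub>0\<close>, all terms but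
  \<open>(z - y\<^sub>0)\<^sup>m\<^sup>-\<^sup>1\<close> times a unit multiple of \<open>p\<^sup>t\<close> vanish modulo \<open>p\<^sup>t\<^sup>+\<^sup>1\<close>.\<close>

lemma critical_residue_unique:
  assumes p: "prime p" and H: "dominant_index p c n m t" and m2: "m \<ge> 2"
    and y0: "y0 < p" and z: "z < p"
    and below: "\<forall>i < m - 1. int p ^ (t + 1) dvd deriv_taylor_coeff c n (int y0) i"
    and crit: "int p ^ (t + 1) dvd deriv_taylor_coeff c n (int z) 0"
  shows "z = y0"
proof -
  have mn: "m \<le> n" using H unfolding dominant_index_def by auto
  define w where "w = int z - int y0"
  define T where "T i = deriv_taylor_coeff c n (int y0) i * w ^ i" for i
  have "deriv_taylor_coeff c n (int z) 0 = (\<Sum>i\<le>n - 1. T i)"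
    unfolding T_def w_def by (rule deriv_taylor_coeff_taylor) (use mn m2 in simp)
  also have "\<dots> = T (m - 1) + (\<Sum>i\<in>{..n - 1} - {m - 1}. T i)"
    using mn m2 by (subst sum.remove[of _ "m - 1"]) auto
  finally have eq: "deriv_taylor_coeff c n (int z) 0 = T (m - 1) + (\<Sum>i\<in>{..n - 1} - {m - 1}. T i)" .
  have "int p ^ (t + 1) dvd T i" if "i \<in> {..n - 1} - {m - 1}" for i
  proof (cases "i < m - 1")
    case True then show ?thesis unfolding T_def using below by (simp add: dvd_mult2)
  next
    case False
    then have "i \<ge> m" using that by auto
    then show ?thesis unfolding T_def using dominant_index_dvd_deriv_taylor_ge[OF H] by (simp add: dvd_mult2)
  qed
  then have "int p ^ (t + 1) dvd T (m - 1)" using eq crit by (metis dvd_add_left_iff dvd_sum)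
  moreover obtain h where h: "deriv_taylor_coeff c n (int y0) (m - 1) = int p ^ t * h"
    using dominant_index_dvd_deriv_taylor[OF H] by blast
  ultimately have "int p ^ t * int p dvd int p ^ t * (h * w ^ (m - 1))"
    unfolding T_def by (simp add: mult_ac)
  then have "int p dvd h * w ^ (m - 1)" using p by (simp add: prime_gt_0_nat)
  moreover have "\<not> int p dvd h"
  proof
    assume "int p dvd h"
    then have "int p ^ (t + 1) dvd deriv_taylor_coeff c n (int y0) (m - 1)"
      using h by (simp add: mult_dvd_mono)
    then show False using dominant_index_not_dvd_deriv_taylor[OF H] by simp
  qed
  moreover have pi: "prime (int p)" using p by simp
  ultimately have "int p dvd w" using prime_dvd_mult_iff prime_dvd_power by blast
  moreover have "\<bar>w\<bar> < int p" unfolding w_def using y0 z by auto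
  ultimately have "w = 0" using dvd_imp_le_int by force
  then show ?thesis unfolding w_def by simp
qed

lemma exists_dominant_index:
  fixes c :: "nat \<Rightarrow> int"
  assumes i0: "i0 \<in> {1..n}" and nd: "\<not> int p ^ (T + 1) dvd int i0 * c i0"
    and above: "\<forall>i\<in>{i0<..n}. int p ^ (T + 1) dvd int i * c i"
  shows "\<exists>t m. t \<le> T \<and> m \<le> i0 \<and> dominant_index p c n m t"
proof -
  define P where "P \<tau> \<longleftrightarrow> (\<exists>i\<in>{1..n}. \<not> int p ^ (\<tau> + 1) dvd int i * c i)" for \<tau>
  have PT: "P T" unfolding P_def using i0 nd by blast
  define t where "t = (LEAST \<tau>. P \<tau>)"
  have Pt: "P t" unfolding t_def by (rule LeastI[of P T, OF PT])
  have tT: "t \<le> T" unfolding t_def by (rule Least_le[of P T, OF PT])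
  have all_dvd: "\<forall>i\<in>{1..n}. int p ^ t dvd int i * c i"
  proof (cases t)
    case (Suc \<tau>)
    then have "\<not> P \<tau>" using not_less_Least[of \<tau> P] unfolding t_def by auto
    then show ?thesis unfolding P_def using Suc by auto
  qed simp
  define Q where "Q i \<longleftrightarrow> i \<in> {1..n} \<and> \<not> int p ^ (t + 1) dvd int i * c i" for i
  obtain j where Qj: "Q j" using Pt unfolding P_def Q_def by blast
  have Q_le: "Q i \<Longrightarrow> i \<le> n" for i unfolding Q_def by auto
  define m where "m = (GREATEST i. Q i)"
  have Qm: "Q m" unfolding m_def by (rule GreatestI_nat[of Q j n]) (use Qj Q_le in auto)
  have m_ge: "Q i \<Longrightarrow> i \<le> m" for i unfolding m_def by (rule Greatest_le_nat[of Q i n]) (use Q_le in auto)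
  have "m \<le> i0"
  proof (rule ccontr)
    assume "\<not> m \<le> i0"
    then have "int p ^ (T + 1) dvd int m * c m" using Qm above unfolding Q_def by auto
    moreover have "int p ^ (t + 1) dvd int p ^ (T + 1)" using tT by (simp add: le_imp_power_dvd)
    ultimately show False using Qm dvd_trans unfolding Q_def by blast
  qed
  moreover have "\<forall>i\<in>{m<..n}. int p ^ (t + 1) dvd int i * c i"
  proof
    fix i assume i: "i \<in> {m<..n}"
    then have "\<not> Q i" using m_ge by force
    moreover have "i \<in> {1..n}" using i Qm unfolding Q_def by auto
    ultimately show "int p ^ (t + 1) dvd int i * c i" unfolding Q_def by auto
  qed
  ultimately show ?thesis
    using tT all_dvd Qm unfolding Q_def dominant_index_def by (intro exI[of _ t] exI[of _ m]) auto
qed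

lemma diff_divide_mono:
  fixes K d d' :: real
  assumes "K \<ge> 0" "1 \<le> d" "d \<le> d'"
  shows "d - K / d \<le> d' - K / d'"
proof -
  have "K / d' \<le> K / d" using assms by (intro divide_left_mono) auto
  then show ?thesis using assms by linarith
qed

lemma diff_divide_le_Suc:
  fixes K K' :: real and d d' :: nat
  assumes "K - d \<ge> 0" "K' \<ge> K - d" "1 \<le> d'" "d' \<le> d"
  shows "real d' - K' / real d' \<le> real d + 1 - K / real d"
proof -
  have "K' / d' \<ge> (K - d) / d'" using assms by (intro divide_right_mono) auto
  moreover have "real d' - (K - d) / d' \<le> real d - (K - d) / d"
    using diff_divide_mono[of "K - d" d' d] assms by simp
  moreover have "(K - d) / d = K / d - 1" using assms by (simp add: field_simps)
  ultimately show ?thesis by linarith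
qed

lemma powr_mult_pred_le:
  fixes K :: real
  assumes p: "p > 1" and m: "m \<ge> 2" and K: "K \<ge> 0"
  shows "real p * real p powr (real (m - 1) - K / real (m - 1)) \<le> real p powr (real m - K / real m)"
proof -
  have "real m - K / real (m - 1) = 1 + (real (m - 1) - K / real (m - 1))"
    using m by (simp add: of_nat_diff)
  then have "real p * real p powr (real (m - 1) - K / real (m - 1)) = real p powr (real m - K / real (m - 1))"
    using p by (simp only: powr_add powr_one)
  also have "\<dots> \<le> real p powr (real m - K / real m)"
  proof -
    have "K / real m \<le> K / real (m - 1)" using K m by (intro divide_left_mono) auto
    then show ?thesis using p by (intro powr_mono) auto
  qed
  finally show ?thesis .
qed

lemma shifted_coeffs_dominant_index:
  assumes p: "prime p" and H: "dominant_index p c n m t"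
    and d: "d \<le> m - 1" "\<not> int p ^ (t + 1) dvd deriv_taylor_coeff c n y d"
  shows "\<exists>t' m'. t' \<le> t + d \<and> m' \<le> Suc d \<and> dominant_index p (shifted_coeffs p c n y) n m' t'"
proof -
  let ?B = "shifted_coeffs p c n y"
  have "Suc d \<in> {1..n}" using d H unfolding dominant_index_def by auto
  moreover have "\<not> int p ^ (t + d + 1) dvd int (Suc d) * ?B (Suc d)"
  proof
    assume "int p ^ (t + d + 1) dvd int (Suc d) * ?B (Suc d)"
    then have "int p ^ d * int p ^ (t + 1) dvd int p ^ d * deriv_taylor_coeff c n y d"
      using index_mult_shifted_coeffs[of "Suc d" p c n y] by (simp add: power_add mult_ac)
    then show False using d p by (simp add: prime_gt_0_nat)
  qed
  moreover have "\<forall>i\<in>{Suc d<..n}. int p ^ (t + d + 1) dvd int i * ?B i"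
  proof
    fix i assume i: "i \<in> {Suc d<..n}"
    obtain h where "deriv_taylor_coeff c n y (i - 1) = int p ^ t * h"
      using dominant_index_dvd_deriv_taylor[OF H] by blast
    then have "int i * ?B i = int p ^ t * int p ^ (i - 1) * h"
      using i index_mult_shifted_coeffs[of i p c n y] by (simp add: mult_ac)
    moreover have "t + d + 1 \<le> t + (i - 1)" using i by auto
    then have "int p ^ (t + d + 1) dvd int p ^ t * int p ^ (i - 1)"
      unfolding power_add[symmetric] by (rule le_imp_power_dvd)
    ultimately show "int p ^ (t + d + 1) dvd int i * ?B i" by simp
  qed
  ultimately show ?thesis using exists_dominant_index by blast
qed

lemma norm_exp_sum_shifted_le:
  assumes p: "prime p" and H: "dominant_index p c n m t"
    and IH: "\<And>c m t. dominant_index p c n m t \<Longrightarrow>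
        norm (exp_sum p k c n) \<le> real p ^ k * real p powr (real m - (real k - real t) / real m)"
    and d: "d \<le> m - 1" "\<not> int p ^ (t + 1) dvd deriv_taylor_coeff c n y d"
    and s: "Suc d \<le> s" and K: "real (Suc k) - real t - real (Suc d) \<ge> 0"
  shows "norm (exp_sum p k (shifted_coeffs p c n y) n) \<le>
     real p ^ Suc k * real p powr (real s - (real (Suc k) - real t) / real s)"
proof -
  define K where "K = real (Suc k) - real t"
  have p1: "real p > 1" using p prime_gt_1_nat by simp
  obtain t' m' where tm: "t' \<le> t + d" "m' \<le> Suc d" "dominant_index p (shifted_coeffs p c n y) n m' t'"
    using shifted_coeffs_dominant_index[OF p H d] by blast
  have "real m' - (real k - real t') / real m' \<le> real (Suc d) + 1 - K / real (Suc d)"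
    using tm K unfolding K_def dominant_index_def by (intro diff_divide_le_Suc) auto
  also have "\<dots> \<le> 1 + (real s - K / real s)"
    using diff_divide_mono[of K "real (Suc d)" "real s"] s K unfolding K_def by simp
  finally have "real p powr (real m' - (real k - real t') / real m') \<le> real p powr (1 + (real s - K / real s))"
    using p1 by (intro powr_mono) auto
  also have "\<dots> = real p * real p powr (real s - K / real s)"
    using p1 by (simp only: powr_add powr_one)
  finally have "real p ^ k * real p powr (real m' - (real k - real t') / real m') \<le>
      real p ^ k * (real p * real p powr (real s - K / real s))"
    by (intro mult_left_mono) auto
  with IH[OF tm(3)] show ?thesis unfolding K_def by (simp add: mult_ac)
qed

lemma sum_norm_exp_sum_shifted_eq_critical:
  assumes p: "prime p" and H: "dominant_index p c n m t" and m2: "m \<ge> 2" and k: "k \<ge> t + 2"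
    and y0: "y0 < p" "\<forall>i<m - 1. int p ^ (t + 1) dvd deriv_taylor_coeff c n (int y0) i"
  shows "(\<Sum>y<p. norm (exp_sum p k (shifted_coeffs p c n (int y)) n))
    = norm (exp_sum p k (shifted_coeffs p c n (int y0)) n)"
proof -
  have "exp_sum p k (shifted_coeffs p c n (int y)) n = 0" if "y \<in> {..<p} - {y0}" for y
  proof -
    have "\<not> int p ^ (t + 1) dvd deriv_taylor_coeff c n (int y) 0"
      using critical_residue_unique[OF p H m2 y0(1), of y] y0(2) that by auto
    then show ?thesis by (rule exp_sum_shifted_coeffs_eq_0_noncritical[OF p H _ k])
  qed
  then show ?thesis using y0(1) by (subst sum.remove[of _ y0]) auto
qed

lemma norm_exp_sum_Suc_le:
  assumes p: "prime p" and H: "dominant_index p c n m t" and m2: "m \<ge> 2"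
    and K: "2 * real m \<le> real (Suc k) - real t"
    and IH: "\<And>c m t. dominant_index p c n m t \<Longrightarrow>
        norm (exp_sum p k c n) \<le> real p ^ k * real p powr (real m - (real k - real t) / real m)"
  shows "norm (exp_sum p (Suc k) c n) \<le>
    real p ^ Suc k * real p powr (real m - (real (Suc k) - real t) / real m)"
proof -
  define K where "K = real (Suc k) - real t"
  have p0: "p > 0" and p1: "p > 1" using p prime_gt_1_nat prime_gt_0_nat by auto
  have k: "k \<ge> t + 2" using K m2 by simp
  define f where "f y = norm (exp_sum p k (shifted_coeffs p c n (int y)) n)" for y
  have f_le: "f y \<le> real p ^ Suc k * real p powr (real s - K / real s)"
    if "d \<le> m - 1" "\<not> int p ^ (t + 1) dvd deriv_taylor_coeff c n (int y) d" "Suc d \<le> s" for y d s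
    unfolding f_def K_def using that K m2 by (intro norm_exp_sum_shifted_le[OF p H IH]) auto
  have "norm (exp_sum p (Suc k) c n) \<le> (\<Sum>y<p. f y)"
    unfolding exp_sum_Suc[OF p0] f_def by (rule order_trans[OF norm_sum]) (simp add: norm_mult)
  (* Either one residue is critical up to the full order m - 1; then it is the only critical
     residue and only its term survives. Or all terms obey the bound for order m - 2, and the
     factor p from their number is absorbed by the exponent. *)
  also have "\<dots> \<le> real p ^ Suc k * real p powr (real m - K / real m)"
  proof (cases "\<exists>y0<p. \<forall>i<m - 1. int p ^ (t + 1) dvd deriv_taylor_coeff c n (int y0) i")
    case True
    then obtain y0 where y0: "y0 < p" "\<forall>i<m - 1. int p ^ (t + 1) dvd deriv_taylor_coeff c n (int y0) i"
      by blast
    obtain d where d: "d \<le> m - 1" "\<not> int p ^ (t + 1) dvd deriv_taylor_coeff c n (int y0) d"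
      by (rule dominant_index_critical_order[OF H])
    then have "Suc d \<le> m" using m2 by simp
    moreover have "(\<Sum>y<p. f y) = f y0"
      unfolding f_def by (rule sum_norm_exp_sum_shifted_eq_critical[OF p H m2 k y0])
    ultimately show ?thesis using f_le[OF d] by simp
  next
    case False
    let ?R = "real p ^ Suc k * real p powr (real (m - 1) - K / real (m - 1))"
    have "f y \<le> ?R" if "y < p" for y
    proof -
      obtain d where d: "d \<le> m - 1" "\<not> int p ^ (t + 1) dvd deriv_taylor_coeff c n (int y) d"
          "\<forall>i<d. int p ^ (t + 1) dvd deriv_taylor_coeff c n (int y) i"
        by (rule dominant_index_critical_order[OF H])
      then have "Suc d \<le> m - 1" using False that by (cases "d = m - 1") auto
      then show ?thesis by (rule f_le[OF d(1,2)])
    qed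
    then have "(\<Sum>y<p. f y) \<le> real p * ?R" using sum_mono[of "{..<p}" f "\<lambda>_. ?R"] by simp
    also have "\<dots> \<le> real p ^ Suc k * real p powr (real m - K / real m)"
      unfolding mult.left_commute[of "real p"] using powr_mult_pred_le[OF p1 m2, of K] K m2
      unfolding K_def by (intro mult_left_mono) auto
    finally show ?thesis .
  qed
  finally show ?thesis unfolding K_def .
qed

lemma norm_exp_sum_le_if_small:
  assumes "p > 0" "m \<ge> 1" "K \<le> real m * real m"
  shows "norm (exp_sum p k c n) \<le> real p ^ k * real p powr (real m - K / real m)"
proof -
  have "real m - K / real m \<ge> 0" using assms by (simp add: field_simps)
  then have "1 \<le> real p powr (real m - K / real m)" using assms by (intro ge_one_powr_ge_zero) auto
  from mult_left_mono[OF this, of "real p ^ k"] show ?thesis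
    using norm_exp_sum_le_card[of p k c n] by simp
qed

theorem norm_exp_sum_le_dominant:
  assumes p: "prime p" and "dominant_index p c n m t"
  shows "norm (exp_sum p k c n) \<le> real p ^ k * real p powr (real m - (real k - real t) / real m)"
  using assms(2)
proof (induction k arbitrary: c m t)
  case 0
  have "m \<ge> 1" using 0 unfolding dominant_index_def by auto
  moreover have "real 0 - real t \<le> real m * real m"
    using order_trans[of "real 0 - real t" 0 "real m * real m"] by simp
  ultimately show ?case using prime_gt_0_nat[OF p] by (intro norm_exp_sum_le_if_small) auto
next
  case (Suc k)
  have m1: "m \<ge> 1" using Suc.prems unfolding dominant_index_def by auto
  show ?case
  proof (cases "real (Suc k) - real t \<le> real m * real m")
    case True
    then show ?thesis using prime_gt_0_nat[OF p] m1 by (intro norm_exp_sum_le_if_small) auto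
  next
    case False
    show ?thesis
    proof (cases "m = 1")
      case True
      then have "exp_sum p (Suc k) c n = 0"
        using exp_sum_eq_0_dominant_index_1[OF p] Suc.prems False by auto
      then show ?thesis by simp
    next
      case m: False
      have "real m * real m \<ge> 2 * real m" using m m1 by (intro mult_right_mono) auto
      then have "2 * real m \<le> real (Suc k) - real t" using False by linarith
      moreover have "m \<ge> 2" using m m1 by simp
      ultimately show ?thesis by (intro norm_exp_sum_Suc_le[OF p Suc.prems _ _ Suc.IH])
    qed
  qed
qed

section \<open>Congruences in \<open>\<int>[1/p]\<close> and digit expansions\<close>

definition pcong :: "nat \<Rightarrow> int \<Rightarrow> real \<Rightarrow> real \<Rightarrow> bool" where
  "pcong p L x y \<longleftrightarrow> (x - y) / real p powi L \<in> \<int>"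

definition pden :: "nat \<Rightarrow> nat \<Rightarrow> real \<Rightarrow> bool" where
  "pden p k x \<longleftrightarrow> x * real p ^ k \<in> \<int>"

definition pdigits :: "nat \<Rightarrow> nat \<Rightarrow> padic \<Rightarrow> bool" where
  "pdigits p k d \<longleftrightarrow> (\<forall>j. d j < p) \<and> (\<forall>j < - int k. d j = 0)"

lemma powi_nonneg_Ints: "0 \<le> j \<Longrightarrow> real p powi j \<in> \<int>"
  by (simp add: power_int_nonneg_exp)

lemma pcong_refl [simp]: "pcong p L x x"
  unfolding pcong_def by simp

lemma pcong_sym: "pcong p L x y \<Longrightarrow> pcong p L y x"
  unfolding pcong_def using Ints_minus by (fastforce simp: minus_divide_left)

lemma pcong_add: "pcong p L a b \<Longrightarrow> pcong p L c d \<Longrightarrow> pcong p L (a + c) (b + d)"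
  unfolding pcong_def using Ints_add by (fastforce simp: add_divide_distrib[symmetric] algebra_simps)

lemma pcong_trans: "pcong p L x y \<Longrightarrow> pcong p L y z \<Longrightarrow> pcong p L x z"
  using pcong_add[of p L x y y z] unfolding pcong_def by simp

lemma pcong_sum:
  "(\<And>j. j \<in> S \<Longrightarrow> pcong p L (f j) (g j)) \<Longrightarrow> pcong p L (\<Sum>j\<in>S. f j) (\<Sum>j\<in>S. g j)"
  unfolding pcong_def by (simp add: sum_subtractf[symmetric] sum_divide_distrib Ints_sum)

lemma pcong_mult_pden:
  assumes p: "1 < p" and z: "pden p a z" and xy: "pcong p L x y"
  shows "pcong p (L - int a) (z * x) (z * y)"
proof -
  have "(z * x - z * y) / real p powi (L - int a) = (z * real p ^ a) * ((x - y) / real p powi L)"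
    using p by (simp add: power_int_diff field_simps)
  moreover have "(z * real p ^ a) * ((x - y) / real p powi L) \<in> \<int>"
    using z xy unfolding pcong_def pden_def by (rule Ints_mult)
  ultimately show ?thesis unfolding pcong_def by (simp only:)
qed

lemma pcong_mult_Ints: "1 < p \<Longrightarrow> z \<in> \<int> \<Longrightarrow> pcong p L x y \<Longrightarrow> pcong p L (z * x) (z * y)"
  using pcong_mult_pden[of p 0 z L x y] unfolding pden_def by simp

lemma pcong_mono:
  assumes p: "1 < p" and "L' \<le> L" and xy: "pcong p L x y"
  shows "pcong p L' x y"
proof -
  have "(x - y) / real p powi L' = real p powi (L - L') * ((x - y) / real p powi L)"
    using p by (simp add: power_int_diff field_simps)
  moreover have "real p powi (L - L') * ((x - y) / real p powi L) \<in> \<int>"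
    using powi_nonneg_Ints[of "L - L'" p] \<open>L' \<le> L\<close> xy unfolding pcong_def by (intro Ints_mult) auto
  ultimately show ?thesis unfolding pcong_def by (simp only:)
qed

lemma pcong_0_iff: "pcong p 0 x y \<longleftrightarrow> x - y \<in> \<int>"
  unfolding pcong_def by simp

lemma pden_add: "pden p k x \<Longrightarrow> pden p k y \<Longrightarrow> pden p k (x + y)"
  unfolding pden_def by (simp add: distrib_right)

lemma pden_mono:
  assumes "k \<le> k'" and "pden p k x"
  shows "pden p k' x"
proof -
  have "x * real p ^ k' = x * real p ^ k * real p ^ (k' - k)"
    using \<open>k \<le> k'\<close> by (simp add: power_add[symmetric])
  moreover have "x * real p ^ k * real p ^ (k' - k) \<in> \<int>"
    using assms(2) unfolding pden_def by (rule Ints_mult) simp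
  ultimately show ?thesis unfolding pden_def by (simp only:)
qed

lemma pden_mult:
  assumes "pden p a x" and "pden p b y"
  shows "pden p (a + b) (x * y)"
proof -
  have "(x * real p ^ a) * (y * real p ^ b) \<in> \<int>"
    using assms unfolding pden_def by (rule Ints_mult)
  then show ?thesis unfolding pden_def by (simp add: power_add mult_ac)
qed

lemma pden_sum: "(\<And>i. i \<in> S \<Longrightarrow> pden p k (f i)) \<Longrightarrow> pden p k (\<Sum>i\<in>S. f i)"
  unfolding pden_def by (simp add: sum_distrib_right Ints_sum)

lemma pdigits_mono: "pdigits p k d \<Longrightarrow> k \<le> k' \<Longrightarrow> pdigits p k' d"
  unfolding pdigits_def by auto

lemma pdigits_finite_support: "pdigits p k d \<Longrightarrow> finite {j. j < N \<and> d j \<noteq> 0}"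
  unfolding pdigits_def
  by (rule finite_subset[of _ "{- int k..<N}"]) (auto simp: not_less[symmetric])

lemma ptrunc_cong: "(\<And>j. j < N \<Longrightarrow> d j = d' j) \<Longrightarrow> ptrunc p N d = ptrunc p N d'"
  unfolding ptrunc_def by (rule sum.cong) auto

lemma ptrunc_nonneg: "ptrunc p N d \<ge> 0"
  unfolding ptrunc_def by (intro sum_nonneg) simp

lemma ptrunc_pcong:
  assumes p: "1 < p" and d: "pdigits p k d" and "N \<le> N'"
  shows "pcong p N (ptrunc p N' d) (ptrunc p N d)"
proof -
  let ?S' = "{j. j < N' \<and> d j \<noteq> 0}" and ?S = "{j. j < N \<and> d j \<noteq> 0}"
  have "?S \<subseteq> ?S'" using \<open>N \<le> N'\<close> by auto
  then have "ptrunc p N' d = (\<Sum>j\<in>?S' - ?S. real (d j) * real p powi j) + ptrunc p N d"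
    unfolding ptrunc_def by (rule sum.subset_diff[OF _ pdigits_finite_support[OF d]])
  then have "(ptrunc p N' d - ptrunc p N d) / real p powi N
      = (\<Sum>j\<in>?S' - ?S. real (d j) * real p powi (j - N))"
    using p by (simp add: sum_divide_distrib power_int_diff)
  moreover have "(\<Sum>j\<in>?S' - ?S. real (d j) * real p powi (j - N)) \<in> \<int>"
    by (intro Ints_sum Ints_mult powi_nonneg_Ints) auto
  ultimately show ?thesis unfolding pcong_def by simp
qed

lemma ptrunc_pden:
  assumes p: "1 < p" and d: "pdigits p k d"
  shows "pden p k (ptrunc p N d)"
  unfolding ptrunc_def
proof (intro pden_sum)
  fix j assume "j \<in> {j. j < N \<and> d j \<noteq> 0}"
  then have "j + int k \<ge> 0" using d unfolding pdigits_def by (auto simp: not_less[symmetric])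
  moreover have "real p powi j * real p ^ k = real p powi (j + int k)"
    using p by (simp add: power_int_add)
  ultimately show "pden p k (real (d j) * real p powi j)"
    unfolding pden_def using powi_nonneg_Ints by (simp add: mult.assoc)
qed

lemma sum_geometric_powi:
  assumes p: "1 < p"
  shows "(\<Sum>j\<in>{a..<a + int i}. (real p - 1) * real p powi j) = real p powi (a + int i) - real p powi a"
proof (induction i)
  case (Suc i)
  have "{a..<a + int (Suc i)} = insert (a + int i) {a..<a + int i}" by auto
  moreover have "real p powi (a + int i) * real p = real p powi (a + int (Suc i))"
    using p power_int_add_1[of "real p" "a + int i"] by (simp add: ac_simps)
  ultimately show ?case using Suc by (simp add: algebra_simps)
qed simp

lemma ptrunc_less:
  assumes p: "1 < p" and d: "pdigits p k d"
  shows "ptrunc p N d < real p powi N"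
proof (cases "N \<ge> - int k")
  case False
  then have "{j. j < N \<and> d j \<noteq> 0} = {}" using d unfolding pdigits_def by auto
  then show ?thesis unfolding ptrunc_def using p by simp
next
  case True
  have "ptrunc p N d \<le> (\<Sum>j\<in>{- int k..<N}. real (d j) * real p powi j)"
    unfolding ptrunc_def using d unfolding pdigits_def
    by (intro sum_mono2) (auto simp: not_less[symmetric])
  also have "\<dots> \<le> (\<Sum>j\<in>{- int k..<N}. (real p - 1) * real p powi j)"
  proof (intro sum_mono mult_right_mono)
    fix j
    have "d j < p" using d unfolding pdigits_def by blast
    then show "real (d j) \<le> real p - 1" by linarith
  qed simp
  also have "\<dots> = real p powi N - real p powi (- int k)"
    using sum_geometric_powi[OF p, of "- int k" "nat (N + int k)"] True by simp
  also have "\<dots> < real p powi N" using p by simp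
  finally show ?thesis .
qed

lemma ptrunc_eq_0_iff:
  assumes p: "1 < p" and d: "pdigits p k d"
  shows "ptrunc p N d = 0 \<longleftrightarrow> (\<forall>j<N. d j = 0)"
proof
  assume "ptrunc p N d = 0"
  then have "\<forall>j\<in>{j. j < N \<and> d j \<noteq> 0}. real (d j) * real p powi j = 0"
    unfolding ptrunc_def
    by (subst sum_nonneg_eq_0_iff[symmetric]) (use pdigits_finite_support[OF d] in auto)
  then show "\<forall>j<N. d j = 0" using p by auto
qed (simp add: ptrunc_def)

lemma pcong_ptrunc_0_iff:
  assumes p: "1 < p" and d: "pdigits p k d"
  shows "pcong p N (ptrunc p N d) 0 \<longleftrightarrow> ptrunc p N d = 0"
proof
  assume "pcong p N (ptrunc p N d) 0"
  then have "ptrunc p N d / real p powi N \<in> \<int>" unfolding pcong_def by simp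
  moreover have "0 \<le> ptrunc p N d / real p powi N" using ptrunc_nonneg p by simp
  moreover have "ptrunc p N d / real p powi N < 1" using ptrunc_less[OF p d] p by simp
  moreover have "x = 0" if "x \<in> \<int>" "0 \<le> x" "x < 1" for x :: real
    using that by (auto elim!: Ints_cases)
  ultimately have "ptrunc p N d / real p powi N = 0" by blast
  then show "ptrunc p N d = 0" using p by simp
qed simp

lemma pdigit_less: "1 < p \<Longrightarrow> pdigit p j q < p"
  unfolding pdigit_def by (simp add: nat_less_iff)

lemma pdigit_pcong:
  assumes p: "1 < p" and xy: "pcong p L x y" and j: "j < L"
  shows "pdigit p j x = pdigit p j y"
proof -
  obtain z where z: "(x - y) / real p powi L = of_int z" using xy unfolding pcong_def by (auto elim: Ints_cases)
  define e where "e = nat (L - j)"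
  have "x / real p powi j - y / real p powi j = (x - y) / real p powi L * real p powi (L - j)"
    using p by (simp add: power_int_diff field_simps)
  also have "real p powi (L - j) = real p ^ e" unfolding e_def using j by (simp add: power_int_nonneg_exp)
  finally have "x / real p powi j = y / real p powi j + of_int (z * int p ^ e)"
    using z by simp
  then have "\<lfloor>x / real p powi j\<rfloor> = \<lfloor>y / real p powi j\<rfloor> + z * int p ^ e"
    by (simp only: floor_add_int)
  moreover have "int p dvd z * int p ^ e" using j unfolding e_def by (simp add: dvd_power)
  ultimately show ?thesis unfolding pdigit_def by (simp add: mod_add_right_eq[symmetric])
qed

lemma pden_divide_powi_low:
  assumes p: "1 < p" and u: "q * real p ^ k = of_int u" and j: "j \<le> - int k"
  shows "q / real p powi j = of_int (u * int p ^ nat (- int k - j))"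
proof -
  have "real p powi (- int k - j) = real p powi (- int k) / real p powi j"
    using p by (simp add: power_int_diff)
  moreover have "real p powi (- int k) = 1 / real p ^ k" by (simp add: power_int_minus_divide)
  ultimately have "q / real p powi j = q * real p ^ k * real p powi (- int k - j)"
    using p by simp
  then show ?thesis using j u by (simp add: power_int_nonneg_exp)
qed

lemma pdigits_pdigit:
  assumes p: "1 < p" and q: "pden p k q"
  shows "pdigits p k (\<lambda>j. pdigit p j q)"
  unfolding pdigits_def
proof (intro conjI allI impI)
  fix j show "pdigit p j q < p" using pdigit_less[OF p] .
next
  fix j :: int assume j: "j < - int k"
  obtain u where u: "q * real p ^ k = of_int u" using q unfolding pden_def by (auto elim: Ints_cases)
  have e: "q / real p powi j = of_int (u * int p ^ nat (- int k - j))"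
    using pden_divide_powi_low[OF p u] j by simp
  have "int p dvd u * int p ^ nat (- int k - j)" using j by (simp add: dvd_power)
  then show "pdigit p j q = 0" unfolding pdigit_def e floor_of_int by simp
qed

lemma pdigit_expansion:
  assumes p: "1 < p" and q: "pden p k q"
  defines "d \<equiv> \<lambda>j. pdigit p j q"
  shows "q = ptrunc p (- int k + int i) d + real p powi (- int k + int i) * \<lfloor>q / real p powi (- int k + int i)\<rfloor>"
proof (induction i)
  case 0
  obtain u where u: "q * real p ^ k = of_int u" using q unfolding pden_def by (auto elim: Ints_cases)
  have "ptrunc p (- int k) d = 0"
    using pdigits_pdigit[OF p q] unfolding ptrunc_def pdigits_def d_def by auto
  moreover have "q = real p powi (- int k) * (q / real p powi (- int k))" using p by simp
  ultimately show ?case using pden_divide_powi_low[OF p u, of "- int k"] by simp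
next
  case (Suc i)
  define L where "L = - int k + int i"
  define f where "f = \<lfloor>q / real p powi L\<rfloor>"
  have pL: "real p powi (L + 1) = real p powi L * real p" using p by (simp add: power_int_add_1)
  have fA: "\<lfloor>q / real p powi (L + 1)\<rfloor> = f div int p"
    unfolding f_def pL using floor_divide_real_eq_div[of "int p" "q / real p powi L"] by (simp add: field_simps)
  have fB: "ptrunc p (L + 1) d = ptrunc p L d + real (d L) * real p powi L"
  proof (cases "d L = 0")
    case True
    then have "{j. j < L + 1 \<and> d j \<noteq> 0} = {j. j < L \<and> d j \<noteq> 0}" by (auto simp: le_less)
    then show ?thesis unfolding ptrunc_def using True by simp
  next
    case False
    then have "{j. j < L + 1 \<and> d j \<noteq> 0} = insert L {j. j < L \<and> d j \<noteq> 0}" by (auto simp: le_less)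
    then show ?thesis
      unfolding ptrunc_def using pdigits_finite_support[OF pdigits_pdigit[OF p q], of L] by (simp add: d_def)
  qed
  have "real (d L) = of_int (f mod int p)"
    unfolding d_def pdigit_def f_def using p by simp
  moreover have "real_of_int f = of_int (f mod int p) + real p * of_int (f div int p)"
    by (metis mod_mult_div_eq mult.commute of_int_add of_int_mult of_int_of_nat_eq)
  ultimately have "q = ptrunc p L d + real (d L) * real p powi L + (real p powi L * real p) * of_int (f div int p)"
    using Suc unfolding L_def[symmetric] f_def[symmetric] by (simp add: algebra_simps)
  also have "\<dots> = ptrunc p (L + 1) d + real p powi (L + 1) * of_int \<lfloor>q / real p powi (L + 1)\<rfloor>"
    by (simp only: fA fB) (simp only: pL)
  finally show ?case unfolding L_def by (simp add: ac_simps)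
qed

lemma ptrunc_pdigit_pcong:
  assumes p: "1 < p" and q: "pden p k q"
  shows "pcong p L (ptrunc p L (\<lambda>j. pdigit p j q)) q"
proof (cases "L \<ge> - int k")
  case True
  then have L: "L = - int k + int (nat (L + int k))" by simp
  have "q = ptrunc p L (\<lambda>j. pdigit p j q) + real p powi L * \<lfloor>q / real p powi L\<rfloor>"
    using pdigit_expansion[OF p q, of "nat (L + int k)"] unfolding L[symmetric] .
  then have "(ptrunc p L (\<lambda>j. pdigit p j q) - q) / real p powi L = - of_int \<lfloor>q / real p powi L\<rfloor>"
    using p by (simp add: field_simps)
  then show ?thesis unfolding pcong_def by simp
next
  case False
  obtain u where u: "q * real p ^ k = of_int u" using q unfolding pden_def by (auto elim: Ints_cases)
  have "ptrunc p L (\<lambda>j. pdigit p j q) = 0"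
    using pdigits_pdigit[OF p q] False unfolding ptrunc_def pdigits_def by auto
  then show ?thesis using pden_divide_powi_low[OF p u, of L] False unfolding pcong_def by simp
qed

section \<open>Ring operations on digit expansions\<close>

definition approx_by :: "nat \<Rightarrow> padic \<Rightarrow> (nat \<Rightarrow> real) \<Rightarrow> bool" where
  "approx_by p x q \<longleftrightarrow> (\<exists>k. \<forall>M. pden p k (q M))
     \<and> (\<forall>L. \<forall>\<^sub>F M in sequentially. pcong p L (ptrunc p L x) (q M))"

lemma eventual_digits:
  assumes p: "1 < p" and den: "\<And>M. pden p k (s M)"
    and stable: "\<And>M M'. M \<le> M' \<Longrightarrow> pcong p (int M - c) (s M') (s M)"
  defines "d \<equiv> \<lambda>j. THE a. \<forall>\<^sub>F M in sequentially. pdigit p j (s M) = a"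
  shows "pdigits p k d" and "\<forall>\<^sub>F M in sequentially. pcong p L (ptrunc p L d) (s M)"
proof -
  define N where "N j = nat (j + 1 + c)" for j :: int
  have stable_digit: "pdigit p j (s M) = pdigit p j (s (N j))" if "M \<ge> N j" for j M
    using pdigit_pcong[OF p stable[OF that]] unfolding N_def by simp
  have d: "d j = pdigit p j (s (N j))" for j
  proof -
    have ev: "\<forall>\<^sub>F M in sequentially. pdigit p j (s M) = pdigit p j (s (N j))"
      unfolding eventually_sequentially using stable_digit by blast
    show ?thesis unfolding d_def
    proof (rule the_equality)
      fix a assume "\<forall>\<^sub>F M in sequentially. pdigit p j (s M) = a"
      with ev have "\<forall>\<^sub>F M in sequentially. a = pdigit p j (s (N j))" by eventually_elim simp
      then show "a = pdigit p j (s (N j))" by simp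
    qed (rule ev)
  qed
  show "pdigits p k d"
    using pdigits_pdigit[OF p den] unfolding pdigits_def d by blast
  show "\<forall>\<^sub>F M in sequentially. pcong p L (ptrunc p L d) (s M)"
    unfolding eventually_sequentially
  proof (intro exI allI impI)
    fix M assume M: "M \<ge> nat (L + c)"
    have "ptrunc p L d = ptrunc p L (\<lambda>j. pdigit p j (s M))"
    proof (rule ptrunc_cong)
      fix j assume "j < L"
      then show "d j = pdigit p j (s M)" using M stable_digit[of j M] unfolding d N_def by simp
    qed
    then show "pcong p L (ptrunc p L d) (s M)" using ptrunc_pdigit_pcong[OF p den] by simp
  qed
qed

lemma approx_by_ptrunc:
  assumes p: "1 < p" and x: "pdigits p k x"
  shows "approx_by p x (\<lambda>M. ptrunc p (int M) x)"
  unfolding approx_by_def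
proof (intro conjI allI exI)
  fix M show "pden p k (ptrunc p (int M) x)" by (rule ptrunc_pden[OF p x])
next
  fix L
  show "\<forall>\<^sub>F M in sequentially. pcong p L (ptrunc p L x) (ptrunc p (int M) x)"
    using eventually_ge_at_top[of "nat L"] by eventually_elim (rule pcong_sym[OF ptrunc_pcong[OF p x]], simp)
qed

lemma approx_by_eventually:
  assumes p: "1 < p" and x: "pdigits p k x" and q: "approx_by p x q"
  shows "\<forall>\<^sub>F M in sequentially. pcong p L (ptrunc p (int M) x) (q M)"
proof -
  have "\<forall>\<^sub>F M in sequentially. pcong p L (ptrunc p L x) (q M)" using q unfolding approx_by_def by blast
  moreover have "\<forall>\<^sub>F M in sequentially. pcong p L (ptrunc p (int M) x) (ptrunc p L x)"
    using eventually_ge_at_top[of "nat L"] by eventually_elim (auto intro: ptrunc_pcong[OF p x])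
  ultimately show ?thesis by eventually_elim (blast intro: pcong_trans)
qed

lemma approx_by_pden: "approx_by p x q \<Longrightarrow> \<exists>k. \<forall>M. pden p k (q M)"
  unfolding approx_by_def by blast

lemma padd_approx:
  assumes p: "1 < p" and x: "pdigits p kx x" and y: "pdigits p ky y"
    and q: "approx_by p x q" and q': "approx_by p y q'"
  shows "pdigits p (max kx ky) (padd p x y)" and "approx_by p (padd p x y) (\<lambda>M. q M + q' M)"
proof -
  define s where "s M = ptrunc p (int M) x + ptrunc p (int M) y" for M :: nat
  have den: "pden p (max kx ky) (s M)" for M unfolding s_def
    by (intro pden_add pden_mono[OF _ ptrunc_pden[OF p x]] pden_mono[OF _ ptrunc_pden[OF p y]]) auto
  have stable: "pcong p (int M - 0) (s M') (s M)" if "M \<le> M'" for M M'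
    unfolding s_def using that by (auto intro!: pcong_add ptrunc_pcong[OF p x] ptrunc_pcong[OF p y])
  have padd: "padd p x y = (\<lambda>j. THE a. \<forall>\<^sub>F M in sequentially. pdigit p j (s M) = a)"
    unfolding padd_def s_def ..
  show "pdigits p (max kx ky) (padd p x y)" unfolding padd by (rule eventual_digits(1)[OF p den stable])
  obtain k1 k2 where "\<forall>M. pden p k1 (q M)" "\<forall>M. pden p k2 (q' M)"
    using q q' approx_by_pden by blast
  then have "\<forall>M. pden p (max k1 k2) (q M + q' M)"
    by (intro allI pden_add) (meson pden_mono max.cobounded1 max.cobounded2)+
  moreover have "\<forall>\<^sub>F M in sequentially. pcong p L (ptrunc p L (padd p x y)) (q M + q' M)" for L
  proof -
    have "\<forall>\<^sub>F M in sequentially. pcong p L (ptrunc p L (padd p x y)) (s M)"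
      unfolding padd by (rule eventual_digits(2)[OF p den stable])
    with approx_by_eventually[OF p x q, of L] approx_by_eventually[OF p y q', of L]
    show ?thesis by eventually_elim (metis s_def pcong_add pcong_trans)
  qed
  ultimately show "approx_by p (padd p x y) (\<lambda>M. q M + q' M)"
    unfolding approx_by_def by blast
qed

lemma ptrunc_mult_pcong:
  assumes p: "1 < p" and x: "pdigits p kx x" and y: "pdigits p ky y" and "M \<le> M'"
  shows "pcong p (int M - int (kx + ky)) (ptrunc p (int M') x * ptrunc p (int M') y)
    (ptrunc p (int M) x * ptrunc p (int M) y)"
proof -
  let ?x = "\<lambda>M. ptrunc p (int M) x" and ?y = "\<lambda>M. ptrunc p (int M) y"
  have "pcong p (int M - int ky) (?y M' * ?x M') (?y M' * ?x M)"
    using \<open>M \<le> M'\<close> by (intro pcong_mult_pden[OF p ptrunc_pden[OF p y]] ptrunc_pcong[OF p x]) auto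
  then have "pcong p (int M - int (kx + ky)) (?y M' * ?x M') (?y M' * ?x M)"
    by (rule pcong_mono[OF p, rotated]) simp
  then have "pcong p (int M - int (kx + ky)) (?x M' * ?y M') (?x M * ?y M')"
    by (metis mult.commute)
  moreover have "pcong p (int M - int kx) (?x M * ?y M') (?x M * ?y M)"
    using \<open>M \<le> M'\<close> by (intro pcong_mult_pden[OF p ptrunc_pden[OF p x]] ptrunc_pcong[OF p y]) auto
  then have "pcong p (int M - int (kx + ky)) (?x M * ?y M') (?x M * ?y M)"
    by (rule pcong_mono[OF p, rotated]) simp
  ultimately show ?thesis by (rule pcong_trans)
qed

lemma pmul_approx:
  assumes p: "1 < p" and x: "pdigits p kx x" and y: "pdigits p ky y"
    and q: "approx_by p x q" and q': "approx_by p y q'"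
  shows "pdigits p (kx + ky) (pmul p x y)" and "approx_by p (pmul p x y) (\<lambda>M. q M * q' M)"
proof -
  define s where "s M = ptrunc p (int M) x * ptrunc p (int M) y" for M :: nat
  have den: "pden p (kx + ky) (s M)" for M unfolding s_def
    by (rule pden_mult[OF ptrunc_pden[OF p x] ptrunc_pden[OF p y]])
  have stable: "pcong p (int M - int (kx + ky)) (s M') (s M)" if "M \<le> M'" for M M'
    unfolding s_def using that by (rule ptrunc_mult_pcong[OF p x y])
  have pmul: "pmul p x y = (\<lambda>j. THE a. \<forall>\<^sub>F M in sequentially. pdigit p j (s M) = a)"
    unfolding pmul_def s_def ..
  show "pdigits p (kx + ky) (pmul p x y)" unfolding pmul by (rule eventual_digits(1)[OF p den stable])
  obtain k1 k2 where k1: "\<forall>M. pden p k1 (q M)" and k2: "\<forall>M. pden p k2 (q' M)"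
    using q q' approx_by_pden by blast
  then have "\<forall>M. pden p (k1 + k2) (q M * q' M)" by (blast intro: pden_mult)
  moreover have "\<forall>\<^sub>F M in sequentially. pcong p L (ptrunc p L (pmul p x y)) (q M * q' M)" for L
  proof -
    have "\<forall>\<^sub>F M in sequentially. pcong p L (ptrunc p L (pmul p x y)) (s M)"
      unfolding pmul by (rule eventual_digits(2)[OF p den stable])
    with approx_by_eventually[OF p x q, of "L + int ky"] approx_by_eventually[OF p y q', of "L + int k1"]
    show ?thesis
    proof eventually_elim
      case (elim M)
      have "pcong p L (ptrunc p (int M) y * ptrunc p (int M) x) (ptrunc p (int M) y * q M)"
        using pcong_mult_pden[OF p ptrunc_pden[OF p y] elim(1)] by simp
      moreover have "pcong p L (q M * ptrunc p (int M) y) (q M * q' M)"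
        using pcong_mult_pden[OF p _ elim(2), of k1 "q M"] k1 by simp
      ultimately have "pcong p L (s M) (q M * q' M)"
        unfolding s_def by (metis mult.commute pcong_trans)
      then show ?case using elim(3) pcong_trans by blast
    qed
  qed
  ultimately show "approx_by p (pmul p x y) (\<lambda>M. q M * q' M)"
    unfolding approx_by_def by blast
qed

lemma pof_nat_eq_pdigit: "1 < p \<Longrightarrow> pof_nat p r = (\<lambda>j. pdigit p j (real r))"
proof
  fix j assume p: "1 < p"
  show "pof_nat p r j = pdigit p j (real r)"
  proof (cases "j < 0")
    case True
    have "real p powi j = 1 / real p ^ nat (- j)"
      using True power_int_minus_divide[of "real p" "- j"] by (simp add: power_int_nonneg_exp)
    then have "real r / real p powi j = real_of_int (int r * int p ^ nat (- j))" by simp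
    moreover have "int p dvd int r * int p ^ nat (- j)" using True by (simp add: dvd_power)
    ultimately show ?thesis unfolding pof_nat_def pdigit_def using True
      by (simp only: floor_of_int) simp
  next
    case False
    have "real p powi j = real (p ^ nat j)" using False by (simp add: power_int_nonneg_exp)
    then have "\<lfloor>real r / real p powi j\<rfloor> = int (r div p ^ nat j)" by (simp only: floor_divide_of_nat_eq)
    moreover have "nat (int (r div p ^ nat j) mod int p) = r div p ^ nat j mod p" by (metis nat_int of_nat_mod)
    ultimately show ?thesis unfolding pof_nat_def pdigit_def using False by simp
  qed
qed

lemma pof_nat_approx:
  assumes p: "1 < p"
  shows "pdigits p 0 (pof_nat p r)" and "approx_by p (pof_nat p r) (\<lambda>_. real r)"
proof -
  have r: "pden p 0 (real r)" by (simp add: pden_def)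
  show "pdigits p 0 (pof_nat p r)" unfolding pof_nat_eq_pdigit[OF p] by (rule pdigits_pdigit[OF p r])
  show "approx_by p (pof_nat p r) (\<lambda>_. real r)"
    using r ptrunc_pdigit_pcong[OF p r] unfolding approx_by_def pof_nat_eq_pdigit[OF p] by auto
qed

lemma ppow_approx:
  assumes p: "1 < p" and x: "pdigits p 0 x" and q: "approx_by p x q"
  shows "pdigits p 0 (ppow p x k) \<and> approx_by p (ppow p x k) (\<lambda>M. q M ^ k)"
proof (induction k)
  case 0
  show ?case using pof_nat_approx[OF p, of 1] by simp
next
  case (Suc k)
  then have "pdigits p (0 + 0) (pmul p (ppow p x k) x)"
    "approx_by p (pmul p (ppow p x k) x) (\<lambda>M. q M ^ k * q M)"
    using pmul_approx[OF p _ x _ q] by auto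
  then show ?case by (simp add: mult.commute)
qed

lemma peval_pof_nat_approx:
  assumes p: "1 < p" and a: "\<forall>l\<in>{1..n}. pdigits p k (a l)" and "i \<le> n"
  shows "pdigits p k (peval p a i (pof_nat p r)) \<and>
    approx_by p (peval p a i (pof_nat p r)) (\<lambda>M. \<Sum>j\<in>{1..i}. ptrunc p (int M) (a j) * real r ^ j)"
  using \<open>i \<le> n\<close>
proof (induction i)
  case 0
  have "pdigits p k (\<lambda>_. 0)" unfolding pdigits_def using p by simp
  moreover have "approx_by p (\<lambda>_. 0) (\<lambda>_. 0)" unfolding approx_by_def pden_def ptrunc_def by simp
  ultimately show ?case by simp
next
  case (Suc i)
  let ?x = "pof_nat p r"
  have IH: "pdigits p k (peval p a i ?x)"
    "approx_by p (peval p a i ?x) (\<lambda>M. \<Sum>j\<in>{1..i}. ptrunc p (int M) (a j) * real r ^ j)"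
    using Suc by auto
  have ai: "pdigits p k (a (Suc i))" using a Suc.prems by auto
  have "pdigits p 0 (ppow p ?x (Suc i))" "approx_by p (ppow p ?x (Suc i)) (\<lambda>M. real r ^ Suc i)"
    using ppow_approx[OF p pof_nat_approx[OF p], of r "Suc i"] by blast+
  from pmul_approx[OF p ai this(1) approx_by_ptrunc[OF p ai] this(2)]
  have "pdigits p k (pmul p (a (Suc i)) (ppow p ?x (Suc i)))"
    "approx_by p (pmul p (a (Suc i)) (ppow p ?x (Suc i))) (\<lambda>M. ptrunc p (int M) (a (Suc i)) * real r ^ Suc i)"
    by auto
  from padd_approx[OF p IH(1) this(1) IH(2) this(2)] show ?case by (simp add: sum.cl_ivl_Suc)
qed

section \<open>The integral as a normalized exponential sum\<close>

lemma Qp_imp_pdigits: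
  assumes "d \<in> Qp p"
  shows "\<exists>k. pdigits p k d"
proof -
  obtain k0 where "\<forall>j. d j < p" "\<forall>j<k0. d j = 0" using assms unfolding Qp_def by blast
  then have "pdigits p (nat (- k0)) d" unfolding pdigits_def by auto
  then show ?thesis by blast
qed

lemma Qp_imp_pdigits_uniform:
  fixes a :: "nat \<Rightarrow> padic"
  assumes "\<forall>l\<in>{1..n}. a l \<in> Qp p"
  shows "\<exists>k. \<forall>l\<in>{1..n}. pdigits p k (a l)"
proof -
  have "\<forall>l\<in>{1..n}. \<exists>k. pdigits p k (a l)" using assms Qp_imp_pdigits by blast
  from bchoice[OF this] obtain K where K: "\<forall>l\<in>{1..n}. pdigits p (K l) (a l)" ..
  have "pdigits p (sum K {1..n}) (a l)" if "l \<in> {1..n}" for l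
  proof -
    have "K l \<le> sum K {1..n}" using that by (intro member_le_sum) auto
    then show ?thesis using K that pdigits_mono by blast
  qed
  then show ?thesis by blast
qed

lemma sum_lessThan_mult_periodic:
  fixes f :: "nat \<Rightarrow> 'a::comm_semiring_1"
  assumes q: "q > 0" and per: "\<And>r. f (r + q) = f r"
  shows "(\<Sum>r<q * c. f r) = of_nat c * (\<Sum>r<q. f r)"
proof -
  have per': "f (y + q * u) = f y" for y u
  proof (induction u)
    case (Suc u)
    have "f (y + q * Suc u) = f ((y + q * u) + q)" by (simp add: algebra_simps)
    then show ?case using per Suc by simp
  qed simp
  have "(\<Sum>r<q * c. f r) = (\<Sum>y<q. \<Sum>u<c. f (y + q * u))" by (rule sum_lessThan_mult_residues[OF q])
  also have "\<dots> = (\<Sum>y<q. of_nat c * f y)" using per' by simp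
  finally show ?thesis by (simp add: sum_distrib_left)
qed

lemma cis_eq_if_diff_Ints: "x - y \<in> \<int> \<Longrightarrow> cis (2 * pi * x) = cis (2 * pi * y)"
proof -
  assume "x - y \<in> \<int>"
  then have "cis (2 * pi * (x - y)) = 1" by (rule cis_multiple_2pi)
  moreover have "cis (2 * pi * x) = cis (2 * pi * y) * cis (2 * pi * (x - y))"
    by (simp add: cis_mult algebra_simps)
  ultimately show ?thesis by simp
qed

text \<open>The character only sees the fractional parts \<open>ptrunc p 0 (a j)\<close> of the coefficients;
  for coefficients in \<open>p\<^sup>-\<^sup>k \<int>\<^sub>p\<close>, multiplying them by \<open>p\<^sup>k\<close> gives integers.\<close>

definition int_coeffs :: "nat \<Rightarrow> nat \<Rightarrow> (nat \<Rightarrow> padic) \<Rightarrow> nat \<Rightarrow> int" where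
  "int_coeffs p k a j = (if j = 0 then 0 else \<lfloor>ptrunc p 0 (a j) * real p ^ k\<rfloor>)"

lemma of_int_coeffs:
  assumes p: "1 < p" and a: "pdigits p k (a j)" and j: "j \<noteq> 0"
  shows "real_of_int (int_coeffs p k a j) = ptrunc p 0 (a j) * real p ^ k"
  using ptrunc_pden[OF p a, of 0] j unfolding pden_def int_coeffs_def by (auto elim: Ints_cases)

lemma pchi_peval_pof_nat:
  assumes p: "1 < p" and a: "\<forall>l\<in>{1..n}. pdigits p k (a l)"
  shows "pchi p (peval p a n (pof_nat p r)) = add_char p k (ipoly (int_coeffs p k a) n (int r))"
proof -
  define d where "d = peval p a n (pof_nat p r)"
  define s where "s M = (\<Sum>j\<in>{1..n}. ptrunc p (int M) (a j) * real r ^ j)" for M :: nat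
  obtain M where "pcong p 0 (ptrunc p 0 d) (s M)"
    using peval_pof_nat_approx[OF p a order.refl, of r]
    unfolding d_def s_def approx_by_def eventually_sequentially by blast
  moreover have "pcong p 0 (s M) (\<Sum>j\<in>{1..n}. ptrunc p 0 (a j) * real r ^ j)"
    unfolding s_def
  proof (rule pcong_sum)
    fix j assume "j \<in> {1..n}"
    then have "pcong p 0 (ptrunc p (int M) (a j)) (ptrunc p 0 (a j))"
      using a by (intro ptrunc_pcong[OF p]) auto
    from pcong_mult_Ints[OF p _ this, of "real r ^ j"]
    show "pcong p 0 (ptrunc p (int M) (a j) * real r ^ j) (ptrunc p 0 (a j) * real r ^ j)"
      by (simp add: mult.commute)
  qed
  ultimately have diff: "ptrunc p 0 d - (\<Sum>j\<in>{1..n}. ptrunc p 0 (a j) * real r ^ j) \<in> \<int>"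
    using pcong_trans pcong_0_iff by blast
  have "real_of_int (ipoly (int_coeffs p k a) n (int r)) / real p ^ k
      = (\<Sum>j\<in>{1..n}. real_of_int (int_coeffs p k a j) / real p ^ k * real r ^ j)"
    unfolding ipoly_def atMost_atLeast0
    by (simp add: sum.atLeast_Suc_atMost int_coeffs_def sum_divide_distrib)
  also have "\<dots> = (\<Sum>j\<in>{1..n}. ptrunc p 0 (a j) * real r ^ j)"
    using a p by (intro sum.cong refl) (simp add: of_int_coeffs)
  finally have "(\<Sum>j\<in>{1..n}. ptrunc p 0 (a j) * real r ^ j) =
      real_of_int (ipoly (int_coeffs p k a) n (int r)) / real p ^ k" ..
  moreover have "pchi p d = cis (2 * pi * ptrunc p 0 d)" unfolding pchi_def ptrunc_def by simp
  ultimately show ?thesis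
    using cis_eq_if_diff_Ints[OF diff] unfolding d_def add_char_def by simp
qed

lemma pint_eq_exp_sum:
  assumes p: "1 < p" and a: "\<forall>l\<in>{1..n}. pdigits p k (a l)"
  shows "pint p (\<lambda>x. pchi p (peval p a n x)) = exp_sum p k (int_coeffs p k a) n / of_nat (p ^ k)"
proof -
  define f where "f r = add_char p k (ipoly (int_coeffs p k a) n (int r))" for r
  have per: "f (r + p ^ k) = f r" for r
    unfolding f_def using add_char_ipoly_periodic[of p k _ n "int r"] p by simp
  have "(\<Sum>r<p ^ N. pchi p (peval p a n (pof_nat p r))) / of_nat (p ^ N)
      = exp_sum p k (int_coeffs p k a) n / of_nat (p ^ k)" if "N \<ge> k" for N
  proof -
    have pN: "p ^ N = p ^ k * p ^ (N - k)" using that by (simp flip: power_add)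
    have "(\<Sum>r<p ^ N. pchi p (peval p a n (pof_nat p r))) = (\<Sum>r<p ^ k * p ^ (N - k). f r)"
      unfolding f_def pN using pchi_peval_pof_nat[OF p a] by simp
    also have "\<dots> = of_nat (p ^ (N - k)) * exp_sum p k (int_coeffs p k a) n"
      unfolding exp_sum_def f_def[symmetric] by (rule sum_lessThan_mult_periodic) (use p per in auto)
    finally show ?thesis unfolding pN using p by (simp add: field_simps)
  qed
  then have "(\<lambda>N. (\<Sum>r<p ^ N. pchi p (peval p a n (pof_nat p r))) / of_nat (p ^ N))
      \<longlonglongrightarrow> exp_sum p k (int_coeffs p k a) n / of_nat (p ^ k)"
    by (intro tendsto_eventually) (auto simp: eventually_sequentially)
  then show ?thesis unfolding pint_def by (rule limI)
qed

section \<open>Absolute values of the coefficients \<open>j a\<^sub>j\<close>\<close>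

lemma pdigits_Least_nonzero:
  assumes d: "pdigits p k d" and nz: "d \<noteq> (\<lambda>_. 0)"
  obtains v where "d v \<noteq> 0" and "\<forall>y<v. d y = 0" and "(LEAST j. d j \<noteq> 0) = v" and "- int k \<le> v"
proof -
  have low: "d y \<noteq> 0 \<Longrightarrow> - int k \<le> y" for y using d unfolding pdigits_def by (meson not_less)
  define P where "P n \<longleftrightarrow> d (int n - int k) \<noteq> 0" for n :: nat
  obtain y0 where y0: "d y0 \<noteq> 0" using nz by auto
  then have "P (nat (y0 + int k))" unfolding P_def using low[OF y0] by simp
  then have P_Least: "P (LEAST n. P n)" by (rule LeastI)
  define v where "v = int (LEAST n. P n) - int k"
  have dv: "d v \<noteq> 0" using P_Least unfolding P_def v_def .
  have below: "\<forall>y<v. d y = 0"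
  proof (intro allI impI)
    fix y assume "y < v"
    show "d y = 0"
    proof (rule ccontr)
      assume "d y \<noteq> 0"
      moreover from this have "- int k \<le> y" by (rule low)
      ultimately have "P (nat (y + int k))" "- int k \<le> y" unfolding P_def by auto
      then have "(LEAST n. P n) \<le> nat (y + int k)" by (simp add: Least_le)
      then show False using \<open>y < v\<close> \<open>- int k \<le> y\<close> unfolding v_def by simp
    qed
  qed
  have "(LEAST j. d j \<noteq> 0) = v"
    using dv below by (intro Least_equality) (auto simp: not_less[symmetric])
  with dv below show thesis using that unfolding v_def by simp
qed

lemma pabs_le_powi_iff:
  assumes p: "1 < p" and d: "pdigits p k d"
  shows "pabs p d \<le> real p powi (- L) \<longleftrightarrow> (\<forall>i<L. d i = 0)"
proof (cases "d = (\<lambda>_. 0)")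
  case True then show ?thesis unfolding pabs_def using p by simp
next
  case False
  obtain v where v: "d v \<noteq> 0" "\<forall>y<v. d y = 0" "(LEAST j. d j \<noteq> 0) = v"
    using pdigits_Least_nonzero[OF d False] by blast
  have "pabs p d \<le> real p powi (- L) \<longleftrightarrow> real p powi (- v) \<le> real p powi (- L)"
    unfolding pabs_def using False v(3) by simp
  also have "\<dots> \<longleftrightarrow> L \<le> v"
  proof
    assume le: "real p powi (- v) \<le> real p powi (- L)"
    show "L \<le> v"
    proof (rule ccontr)
      assume "\<not> L \<le> v"
      then have "real p powi (- L) < real p powi (- v)" using p by (intro power_int_strict_increasing) auto
      then show False using le by simp
    qed
  qed (use p in \<open>auto intro: power_int_increasing\<close>)
  also have "\<dots> \<longleftrightarrow> (\<forall>i<L. d i = 0)" using v(1,2) by (meson not_less order_less_le_trans)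
  finally show ?thesis .
qed

lemma pabs_eq_powi:
  assumes d: "pdigits p k d" and nz: "d \<noteq> (\<lambda>_. 0)"
  obtains v where "pabs p d = real p powi (- v)" and "- int k \<le> v"
  using pdigits_Least_nonzero[OF d nz] nz unfolding pabs_def by metis

lemma pmul_pof_nat_approx:
  assumes p: "1 < p" and a: "pdigits p k a"
  shows "pdigits p k (pmul p (pof_nat p j) a)"
    and "approx_by p (pmul p (pof_nat p j) a) (\<lambda>M. real j * ptrunc p (int M) a)"
  using pmul_approx[OF p pof_nat_approx(1)[OF p] a pof_nat_approx(2)[OF p] approx_by_ptrunc[OF p a]] by auto

lemma of_int_divide_power_Ints_iff:
  fixes z :: int and p e :: nat
  assumes "p > 0"
  shows "real_of_int z / real p ^ e \<in> \<int> \<longleftrightarrow> int p ^ e dvd z"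
proof
  assume "real_of_int z / real p ^ e \<in> \<int>"
  then obtain w where "real_of_int z / real p ^ e = of_int w" by (auto elim: Ints_cases)
  then have "real_of_int z = real_of_int (int p ^ e * w)" using assms by (simp add: field_simps)
  then show "int p ^ e dvd z" by (simp only: of_int_eq_iff) simp
next
  assume "int p ^ e dvd z"
  then obtain w where "z = int p ^ e * w" by blast
  then show "real_of_int z / real p ^ e \<in> \<int>" using assms by simp
qed

text \<open>Only the fractional part of \<open>a\<close> enters \<open>A\<close>, hence the restriction \<open>0 \<le> L\<close>.\<close>

lemma pabs_pmul_pof_nat_le_iff_dvd:
  assumes p: "1 < p" and a: "pdigits p k a"
    and A: "ptrunc p 0 a * real p ^ k = of_int A"
    and L: "0 \<le> L" "L \<le> int k"
  shows "pabs p (pmul p (pof_nat p j) a) \<le> real p powi L \<longleftrightarrow> int p ^ nat (int k - L) dvd int j * A"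
proof -
  define x where "x = pmul p (pof_nat p j) a"
  have x: "pdigits p k x" and approx: "approx_by p x (\<lambda>M. real j * ptrunc p (int M) a)"
    unfolding x_def using pmul_pof_nat_approx[OF p a] by auto
  have "pabs p x \<le> real p powi L \<longleftrightarrow> (\<forall>i < - L. x i = 0)"
    using pabs_le_powi_iff[OF p x, of "- L"] by simp
  also have "\<dots> \<longleftrightarrow> pcong p (- L) (ptrunc p (- L) x) 0"
    using ptrunc_eq_0_iff[OF p x] pcong_ptrunc_0_iff[OF p x] by simp
  also have "\<dots> \<longleftrightarrow> pcong p (- L) (real j * ptrunc p 0 a) 0"
  proof -
    obtain M where M: "pcong p (- L) (ptrunc p (- L) x) (real j * ptrunc p (int M) a)"
      using approx unfolding approx_by_def eventually_sequentially by blast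
    have "pcong p 0 (ptrunc p (int M) a) (ptrunc p 0 a)" by (rule ptrunc_pcong[OF p a]) simp
    then have "pcong p 0 (real j * ptrunc p (int M) a) (real j * ptrunc p 0 a)"
      by (rule pcong_mult_Ints[OF p, rotated]) simp
    then have "pcong p (- L) (real j * ptrunc p (int M) a) (real j * ptrunc p 0 a)"
      by (rule pcong_mono[OF p, rotated]) (use L in simp)
    then have "pcong p (- L) (ptrunc p (- L) x) (real j * ptrunc p 0 a)" using M pcong_trans by blast
    then show ?thesis using pcong_sym pcong_trans by blast
  qed
  also have "\<dots> \<longleftrightarrow> real_of_int (int j * A) / real p ^ nat (int k - L) \<in> \<int>"
  proof -
    define e1 where "e1 = nat L"
    define e2 where "e2 = nat (int k - L)"
    have k: "k = e1 + e2" unfolding e1_def e2_def using L by simp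
    have pL: "real p powi (- L) = 1 / real p ^ e1"
      unfolding e1_def using L power_int_minus_divide[of "real p" L] by (simp add: power_int_nonneg_exp)
    have pa: "ptrunc p 0 a = real_of_int A / real p ^ k" using A p by (simp add: field_simps)
    have "(real j * ptrunc p 0 a - 0) / real p powi (- L) = real_of_int (int j * A) / real p ^ e2"
      unfolding pa pL k using p by (simp add: power_add field_simps)
    then show ?thesis unfolding pcong_def e2_def by simp
  qed
  also have "\<dots> \<longleftrightarrow> int p ^ nat (int k - L) dvd int j * A"
    by (rule of_int_divide_power_Ints_iff) (use p in simp)
  finally show ?thesis unfolding x_def .
qed

lemma ptrunc_eq_lowest_digit:
  assumes p: "1 < p" and a: "pdigits p k a" and v: "a v \<noteq> 0" "\<forall>y<v. a y = 0" and L: "v < L"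
  obtains z :: int where "ptrunc p L a = real p powi v * (real (a v) + real p * of_int z)"
proof -
  have "{j. j < v + 1 \<and> a j \<noteq> 0} = {v}" using v by (auto simp: le_less)
  then have "ptrunc p (v + 1) a = real (a v) * real p powi v" unfolding ptrunc_def by simp
  moreover have "pcong p (v + 1) (ptrunc p L a) (ptrunc p (v + 1) a)"
    by (rule ptrunc_pcong[OF p a]) (use L in simp)
  ultimately obtain z where "(ptrunc p L a - real (a v) * real p powi v) / real p powi (v + 1) = of_int z"
    unfolding pcong_def by (auto elim: Ints_cases)
  moreover have "real p powi (v + 1) = real p powi v * real p" using p by (simp add: power_int_add_1)
  ultimately have "ptrunc p L a = real p powi v * (real (a v) + real p * of_int z)"
    using p by (simp add: field_simps)
  then show thesis by (rule that)
qed

lemma pmul_pof_nat_eq_0_pcong: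
  assumes p: "1 < p" and a: "pdigits p k a" and zero: "pmul p (pof_nat p l) a = (\<lambda>_. 0)"
  shows "pcong p L (real l * ptrunc p L a) 0"
proof -
  have "\<forall>\<^sub>F M in sequentially. pcong p L (ptrunc p L (\<lambda>_. 0)) (real l * ptrunc p (int M) a)"
    using pmul_pof_nat_approx(2)[OF p a, of l] unfolding zero approx_by_def by blast
  then obtain M0 where M0: "\<forall>M\<ge>M0. pcong p L 0 (real l * ptrunc p (int M) a)"
    unfolding eventually_sequentially ptrunc_def by auto
  define M where "M = max M0 (nat L)"
  have M: "M \<ge> nat L" "pcong p L 0 (real l * ptrunc p (int M) a)" using M0 unfolding M_def by auto
  have "pcong p L (ptrunc p (int M) a) (ptrunc p L a)" by (rule ptrunc_pcong[OF p a]) (use M in simp)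
  then have "pcong p L (real l * ptrunc p (int M) a) (real l * ptrunc p L a)"
    by (rule pcong_mult_Ints[OF p, rotated]) simp
  then show ?thesis using M(2) pcong_sym pcong_trans by blast
qed

lemma pmul_pof_nat_neq_0:
  assumes p: "prime p" and a: "pdigits p k a" and nz: "a \<noteq> (\<lambda>_. 0)" and l: "l \<ge> 1"
  shows "pmul p (pof_nat p l) a \<noteq> (\<lambda>_. 0)"
proof
  have p1: "1 < p" using p prime_gt_1_nat by blast
  assume zero: "pmul p (pof_nat p l) a = (\<lambda>_. 0)"
  obtain v where v: "a v \<noteq> 0" "\<forall>y<v. a y = 0" by (rule pdigits_Least_nonzero[OF a nz])
  define L where "L = v + int (l + 1)"
  have "v < L" unfolding L_def by simp
  then obtain z where z: "ptrunc p L a = real p powi v * (real (a v) + real p * of_int z)"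
    by (rule ptrunc_eq_lowest_digit[OF p1 a v])
  obtain w where w: "(real l * ptrunc p L a - 0) / real p powi L = of_int w"
    using pmul_pof_nat_eq_0_pcong[OF p1 a zero, of L] unfolding pcong_def by (auto elim: Ints_cases)
  have pL: "real p powi L = real p powi v * real p ^ (l + 1)"
    unfolding L_def using p1 by (simp add: power_int_add)
  have P0: "real p powi v \<noteq> 0" using p1 by simp
  have "real l * ptrunc p L a = of_int w * real p powi L" using w P0 p1 by (simp add: field_simps)
  then have "real p powi v * (real l * (real (a v) + real p * of_int z))
      = real p powi v * (of_int w * real p ^ (l + 1))"
    unfolding z pL by (simp add: mult_ac)
  then have "real l * (real (a v) + real p * of_int z) = of_int w * real p ^ (l + 1)"
    using P0 by (rule mult_left_cancel[THEN iffD1, rotated])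
  then have "real_of_int (int l * (int (a v) + int p * z)) = real_of_int (w * int p ^ (l + 1))"
    by simp
  then have "int l * (int (a v) + int p * z) = w * int p ^ (l + 1)" by (simp only: of_int_eq_iff)
  then have "int p ^ (l + 1) dvd int l * (int (a v) + int p * z)" by simp
  moreover have "\<not> int p dvd int (a v) + int p * z"
  proof
    assume "int p dvd int (a v) + int p * z"
    then have "p dvd a v" by (simp add: dvd_add_left_iff)
    moreover have "a v < p" using a unfolding pdigits_def by blast
    ultimately show False using v(1) by (simp add: nat_dvd_not_less)
  qed
  then have "coprime (int p ^ (l + 1)) (int (a v) + int p * z)"
    using p by (simp add: prime_imp_coprime coprime_power_left_iff)
  ultimately have "int p ^ (l + 1) dvd int l" using coprime_dvd_mult_left_iff by blast
  then have "p ^ (l + 1) dvd l" by (metis of_nat_dvd_iff of_nat_power)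
  then have "p ^ (l + 1) \<le> l" using l by (simp add: dvd_imp_le)
  moreover have "l < p ^ (l + 1)" using power_gt_expt[of p "l + 1"] p1 by simp
  ultimately show False by simp
qed

lemma last_maximizer:
  fixes f :: "nat \<Rightarrow> 'a::linorder"
  assumes "n \<ge> 1"
  defines "m \<equiv> Max {l\<in>{1..n}. \<forall>j\<in>{1..n}. j \<noteq> l \<longrightarrow> f j \<le> f l}"
  shows "m \<in> {1..n}" and "\<forall>j\<in>{1..n}. f j \<le> f m" and "\<forall>j\<in>{m<..n}. f j < f m"
proof -
  let ?S = "{l\<in>{1..n}. \<forall>j\<in>{1..n}. j \<noteq> l \<longrightarrow> f j \<le> f l}"
  have fin: "finite ?S" by (rule finite_subset[of _ "{1..n}"]) auto
  have fin_img: "finite (f ` {1..n})" by simp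
  have "Max (f ` {1..n}) \<in> f ` {1..n}" using assms(1) by (intro Max_in[OF fin_img]) auto
  then obtain l where l: "Max (f ` {1..n}) = f l" "l \<in> {1..n}" by (rule imageE)
  have "f j \<le> f l" if "j \<in> {1..n}" for j
    unfolding l(1)[symmetric] using that by (intro Max_ge[OF fin_img] imageI)
  then have "l \<in> ?S" using l(2) by simp
  then have "?S \<noteq> {}" by blast
  then have mS: "m \<in> ?S" unfolding m_def by (rule Max_in[OF fin])
  then show "m \<in> {1..n}" by blast
  show max: "\<forall>j\<in>{1..n}. f j \<le> f m"
  proof
    fix j assume "j \<in> {1..n}"
    then show "f j \<le> f m" using mS by (cases "j = m") auto
  qed
  show "\<forall>j\<in>{m<..n}. f j < f m"
  proof
    fix j assume j: "j \<in> {m<..n}"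
    have "j \<notin> ?S"
    proof
      assume "j \<in> ?S"
      then have "j \<le> m" unfolding m_def by (rule Max_ge[OF fin])
      then show False using j by simp
    qed
    then obtain j' where "j' \<in> {1..n}" "\<not> f j' \<le> f j" using j mS by auto
    then show "f j < f m" using max by (meson less_le_trans not_le)
  qed
qed

lemma pabs_pos:
  assumes p: "1 < p" and d: "pdigits p k d" and nz: "d \<noteq> (\<lambda>_. 0)"
  shows "pabs p d > 0"
proof -
  obtain v where "pabs p d = real p powi (- v)" by (rule pabs_eq_powi[OF d nz])
  then show ?thesis using p by simp
qed

lemma pabs_less_powi_imp_le:
  assumes p: "1 < p" and d: "pdigits p k d" and less: "pabs p d < real p powi K"
  shows "pabs p d \<le> real p powi (K - 1)"
proof (cases "d = (\<lambda>_. 0)")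
  case True then show ?thesis unfolding pabs_def using p by simp
next
  case False
  then obtain v where v: "pabs p d = real p powi (- v)" by (rule pabs_eq_powi[OF d])
  have "- v < K"
  proof (rule ccontr)
    assume "\<not> - v < K"
    then have "real p powi K \<le> real p powi (- v)" using p by (intro power_int_increasing) auto
    then show False using less v by simp
  qed
  then show ?thesis unfolding v using p by (intro power_int_increasing) auto
qed

lemma dominant_index_int_coeffs:
  assumes p: "1 < p" and a: "\<forall>l\<in>{1..n}. pdigits p k (a l)"
    and m: "m \<in> {1..n}" and K: "1 \<le> K" "K \<le> int k"
    and eq: "pabs p (pmul p (pof_nat p m) (a m)) = real p powi K"
    and le: "\<forall>j\<in>{1..n}. pabs p (pmul p (pof_nat p j) (a j)) \<le> real p powi K"
    and less: "\<forall>j\<in>{m<..n}. pabs p (pmul p (pof_nat p j) (a j)) < real p powi K"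
  shows "dominant_index p (int_coeffs p k a) n m (nat (int k - K))"
proof -
  define t where "t = nat (int k - K)"
  have t1: "nat (int k - (K - 1)) = t + 1" unfolding t_def using K by simp
  have iff: "pabs p (pmul p (pof_nat p j) (a j)) \<le> real p powi L
      \<longleftrightarrow> int p ^ nat (int k - L) dvd int j * int_coeffs p k a j"
    if "j \<in> {1..n}" "0 \<le> L" "L \<le> int k" for j L
    using that a of_int_coeffs[OF p, of k a j]
    by (intro pabs_pmul_pof_nat_le_iff_dvd[OF p]) auto
  have "real p powi (K - 1) < real p powi K" using p by (intro power_int_strict_increasing) auto
  then have "\<not> pabs p (pmul p (pof_nat p m) (a m)) \<le> real p powi (K - 1)" using eq by simp
  moreover have "pabs p (pmul p (pof_nat p j) (a j)) \<le> real p powi (K - 1)" if "j \<in> {m<..n}" for j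
  proof -
    have "pdigits p k (a j)" using that m a by auto
    from pmul_pof_nat_approx(1)[OF p this] show ?thesis
      by (rule pabs_less_powi_imp_le[OF p]) (use that less in auto)
  qed
  ultimately show ?thesis
    unfolding dominant_index_def t_def[symmetric] using m le K iff[of _ K] iff[of _ "K - 1"]
    by (auto simp: t_def t1)
qed

lemma norm_pint_le:
  assumes p: "prime p" and a: "\<forall>l\<in>{1..n}. pdigits p k (a l)"
    and m: "m \<in> {1..n}" and K: "K \<le> int k"
    and eq: "pabs p (pmul p (pof_nat p m) (a m)) = real p powi K"
    and le: "\<forall>j\<in>{1..n}. pabs p (pmul p (pof_nat p j) (a j)) \<le> real p powi K"
    and less: "\<forall>j\<in>{m<..n}. pabs p (pmul p (pof_nat p j) (a j)) < real p powi K"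
  shows "cmod (pint p (\<lambda>x. pchi p (peval p a n x))) \<le> real p powr (real m - real_of_int K / real m)"
proof -
  have p1: "1 < p" using p prime_gt_1_nat by blast
  have m1: "m \<ge> 1" using m by simp
  have "cmod (exp_sum p k (int_coeffs p k a) n) \<le> real p ^ k * real p powr (real m - real_of_int K / real m)"
  proof (cases "real_of_int K \<le> real m * real m")
    case True
    then show ?thesis using p1 m1 by (intro norm_exp_sum_le_if_small) auto
  next
    case False
    moreover have "1 \<le> real m * real m" using mult_mono[of 1 "real m" 1 "real m"] m1 by simp
    ultimately have "1 \<le> K" by linarith
    then have "dominant_index p (int_coeffs p k a) n m (nat (int k - K))"
      using dominant_index_int_coeffs[OF p1 a m _ K eq le less] by blast
    from norm_exp_sum_le_dominant[OF p this, of k] show ?thesis using K by simp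
  qed
  then show ?thesis
    unfolding pint_eq_exp_sum[OF p1 a] using p1 by (simp add: norm_divide norm_power divide_le_eq mult.commute)
qed

lemma pow_divide_powi_powr:
  assumes p: "1 < p" and m: "m \<ge> 1"
  shows "real p ^ m / (real p powi K) powr (1 / real m) = real p powr (real m - real_of_int K / real m)"
proof -
  have "real p powi K = real p powr (real_of_int K)" using p by (simp add: powr_real_of_int')
  then have "(real p powi K) powr (1 / real m) = real p powr (real_of_int K / real m)"
    by (simp add: powr_powr)
  moreover have "real p ^ m = real p powr (real m)" using p by (simp add: powr_realpow)
  ultimately show ?thesis by (simp add: powr_diff)
qed

theorem mainTheorem1:
  fixes p n :: nat and a :: "nat \<Rightarrow> padic"
  assumes "prime p" and "n \<ge> 1"
    and "\<forall>l\<in>{1..n}. a l \<in> Qp p"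
    and "\<exists>l\<in>{1..n}. a l \<noteq> (\<lambda>_. 0)"
  defines "m \<equiv> Max {l\<in>{1..n}. \<forall>j\<in>{1..n}. j \<noteq> l \<longrightarrow>
             pabs p (pmul p (pof_nat p j) (a j)) \<le> pabs p (pmul p (pof_nat p l) (a l))}"
  shows "cmod (pint p (\<lambda>x. pchi p (peval p a n x)))
           \<le> real p ^ m / (pabs p (pmul p (pof_nat p m) (a m))) powr (1 / real m)"
proof -
  have p1: "1 < p" using assms(1) prime_gt_1_nat by blast
  obtain k where a: "\<forall>l\<in>{1..n}. pdigits p k (a l)" using Qp_imp_pdigits_uniform[OF assms(3)] by blast
  let ?x = "\<lambda>j. pmul p (pof_nat p j) (a j)"
  have x: "pdigits p k (?x j)" if "j \<in> {1..n}" for j using a that pmul_pof_nat_approx(1)[OF p1] by blast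
  note m = last_maximizer[OF assms(2), of "\<lambda>j. pabs p (?x j)", folded m_def]
  obtain l where l: "l \<in> {1..n}" "a l \<noteq> (\<lambda>_. 0)" using assms(4) by blast
  have "?x l \<noteq> (\<lambda>_. 0)" by (rule pmul_pof_nat_neq_0[OF assms(1)]) (use a l in auto)
  then have "pabs p (?x l) > 0" by (rule pabs_pos[OF p1 x[OF l(1)]])
  then have "pabs p (?x m) \<noteq> 0" using m(2) l(1) by fastforce
  then have "?x m \<noteq> (\<lambda>_. 0)" unfolding pabs_def by auto
  then obtain v where v: "pabs p (?x m) = real p powi (- v)" "- int k \<le> v"
    by (rule pabs_eq_powi[OF x[OF m(1)]])
  have "cmod (pint p (\<lambda>x. pchi p (peval p a n x))) \<le> real p powr (real m - real_of_int (- v) / real m)"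
    using m v by (intro norm_pint_le[OF assms(1) a]) auto
  then show ?thesis using v pow_divide_powi_powr[OF p1] m(1) by simp
qed

end
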